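(* Let $(X,W)$ be a marked simplicial set. (1)(a) If $\mathrm{Ex}_+(X,W)$ is a quasicategory, then $(X,W)$ has the right lifting property with respect to $\{\mathrm{LJ}^n_k\hookrightarrow\mathrm{L}^n_k\mid n\ge2,\ 0<k\le n\}$. (1)(b) If $X$ is a quasicategory and $(X,W)$ satisfies CLF, then $\mathrm{Ex}_+(X,W)$ is a quasicategory. (2)(a) If $\mathrm{Ex}^{\mathrm{op}}_+(X,W)$ is a quasicategory, then $(X,W)$ has the right lifting property with respect to $\{\mathrm{RJ}^n_k\hookrightarrow\mathrm{R}^n_k\mid n\ge2,\ 0\le k<n\}$. (2)(b) If $X$ is a quasicategory and $(X,W)$ satisfies CRF, then $\mathrm{Ex}^{\mathrm{op}}_+(X,W)$ is a quasicategory.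
   Context: A marked simplicial set is a pair $(X,W)$ where $X$ is a simplicial set and $W \subseteq X_1$ contains all degenerate $1$-simplices; marked maps preserve marked $1$-simplices. Posets are regarded as simplicial sets via the nerve; $[n]=\{0<\dots<n\}$. For $n\ge 0$, $0\le k\le n$, $\mathrm{L}^n_k$ is the nerve of the poset of subsets $A\subseteq[n]$ with $k\in A$, ordered by inclusion, where $A_0\subseteq A_1$ is marked iff $\max A_0=\max A_1$; $\mathrm{LJ}^n_k\subseteq \mathrm{L}^n_k$ is the maximal simplicial subset not containing the vertex $[n]$. $\mathrm{R}^n_k$ is the nerve of the opposite poset (arrows $A_0\to A_1$ when $A_0\supseteq A_1$), where $A_0\supseteq A_1$ is marked iff $\min A_0=\min A_1$; $\mathrm{RJ}^n_k\subseteq\mathrm{R}^n_k$ is the maximal simplicial subset omitting the vertex $[n]$. $W$ is weakly closed under composition if every map $\Lambda^2_1\to X$ with both edges marked extends to a $2$-simplex all of whose edges are marked. A marked quasicategory $(\mathcal{C},W)$ satisfies CLF if $W$ is weakly closed under composition and it has the right lifting property against all $\mathrm{LJ}^n_k\hookrightarrow\mathrm{L}^n_k$ ($n\ge2$, $0<k\le n$); it satisfies CRF if $W$ is weakly closed under composition and it has the right lifting property against all $\mathrm{RJ}^n_k\hookrightarrow\mathrm{R}^n_k$ ($n\ge2$, $0\le k<n$). Marked Ex: $\mathrm{sd}_+[n]$ is the nerve of the poset of non-empty subsets of $[n]$ ordered by inclusion, with $A_0\subseteq A_1$ marked iff $\max A_0=\max A_1$; $\mathrm{sd}^{\mathrm{op}}_+[n]$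 is the nerve of the opposite poset, with $A_0\supseteq A_1$ marked iff $\min A_0=\min A_1$. Both are cosimplicial objects in marked simplicial sets via direct image of subsets. $\mathrm{Ex}_+(X,W)$ is the simplicial set with $n$-simplices the marked maps $\mathrm{sd}_+[n]\to(X,W)$, and $\mathrm{Ex}^{\mathrm{op}}_+(X,W)$ the simplicial set with $n$-simplices the marked maps $\mathrm{sd}^{\mathrm{op}}_+[n]\to(X,W)$. *)

theory Defs
  imports Main
begin

text \<open>A monotone map theta : [m] -> [n], represented by its values on {0..m}.\<close>
definition mono_map :: "(nat \<Rightarrow> nat) \<Rightarrow> nat \<Rightarrow> nat \<Rightarrow> bool" where
  "mono_map \<theta> m n \<longleftrightarrow> (\<forall>i j. i \<le> j \<longrightarrow> j \<le> m \<longrightarrow> \<theta> i \<le> \<theta> j) \<and> (\<forall>i\<le>m. \<theta> i \<le> n)"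

text \<open>cells X n = set of n-simplices; act X theta m n x = X(theta)(x) for theta : [m] -> [n].\<close>
record 'a sset =
  cells :: "nat \<Rightarrow> 'a set"
  act :: "(nat \<Rightarrow> nat) \<Rightarrow> nat \<Rightarrow> nat \<Rightarrow> 'a \<Rightarrow> 'a"

definition is_sset :: "'a sset \<Rightarrow> bool" where
  "is_sset X \<longleftrightarrow>
     (\<forall>\<theta> m n x. mono_map \<theta> m n \<longrightarrow> x \<in> cells X n \<longrightarrow> act X \<theta> m n x \<in> cells X m) \<and>
     (\<forall>n x. x \<in> cells X n \<longrightarrow> act X id n n x = x) \<and>
     (\<forall>\<theta> \<eta> m n p x. mono_map \<theta> m n \<longrightarrow> mono_map \<eta> n p \<longrightarrow> x \<in> cells X p \<longrightarrow>
         act X \<theta> m n (act X \<eta> n p x) = act X (\<eta> \<circ> \<theta>) m p x) \<and>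
     (\<forall>\<theta> \<theta>' m n x. mono_map \<theta> m n \<longrightarrow> (\<forall>i\<le>m. \<theta> i = \<theta>' i) \<longrightarrow> x \<in> cells X n \<longrightarrow>
         act X \<theta> m n x = act X \<theta>' m n x)"

definition smap :: "'b sset \<Rightarrow> 'a sset \<Rightarrow> (nat \<Rightarrow> 'b \<Rightarrow> 'a) \<Rightarrow> bool" where
  "smap A X f \<longleftrightarrow>
     (\<forall>n. \<forall>x\<in>cells A n. f n x \<in> cells X n) \<and>
     (\<forall>\<theta> m n x. mono_map \<theta> m n \<longrightarrow> x \<in> cells A n \<longrightarrow> f m (act A \<theta> m n x) = act X \<theta> m n (f n x))"

text \<open>The simplicial subset of B with simplices given by the family Asub (assumed closed).\<close>
definition subsset :: "'b sset \<Rightarrow> (nat \<Rightarrow> 'b set) \<Rightarrow> 'b sset" where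
  "subsset B Asub = \<lparr>cells = Asub, act = act B\<rparr>"

definition rlp :: "'b sset \<Rightarrow> (nat \<Rightarrow> 'b set) \<Rightarrow> 'a sset \<Rightarrow> bool" where
  "rlp B Asub X \<longleftrightarrow>
     (\<forall>f. smap (subsset B Asub) X f \<longrightarrow>
        (\<exists>g. smap B X g \<and> (\<forall>n. \<forall>a\<in>Asub n. g n a = f n a)))"

definition marked_sset :: "'a sset \<Rightarrow> 'a set \<Rightarrow> bool" where
  "marked_sset X W \<longleftrightarrow> is_sset X \<and> W \<subseteq> cells X 1 \<and>
     (\<forall>x\<in>cells X 0. act X (\<lambda>_. 0) 1 0 x \<in> W)"

definition marked_map :: "'b sset \<Rightarrow> 'b set \<Rightarrow> 'a sset \<Rightarrow> 'a set \<Rightarrow> (nat \<Rightarrow> 'b \<Rightarrow> 'a) \<Rightarrow> bool" where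
  "marked_map A V X W f \<longleftrightarrow> smap A X f \<and> (\<forall>e\<in>V. f 1 e \<in> W)"

definition mrlp :: "'b sset \<Rightarrow> 'b set \<Rightarrow> (nat \<Rightarrow> 'b set) \<Rightarrow> 'a sset \<Rightarrow> 'a set \<Rightarrow> bool" where
  "mrlp B V Asub X W \<longleftrightarrow>
     (\<forall>f. marked_map (subsset B Asub) (V \<inter> Asub 1) X W f \<longrightarrow>
        (\<exists>g. marked_map B V X W g \<and> (\<forall>n. \<forall>a\<in>Asub n. g n a = f n a)))"

text \<open>n-simplices: monotone sequences s 0 \<le> ... \<le> s n in P, extended by undefined.\<close>
definition nerve :: "'p set \<Rightarrow> ('p \<Rightarrow> 'p \<Rightarrow> bool) \<Rightarrow> (nat \<Rightarrow> 'p) sset" where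
  "nerve P le = \<lparr>cells = (\<lambda>n. {s. (\<forall>i\<le>n. s i \<in> P) \<and> (\<forall>i j. i \<le> j \<longrightarrow> j \<le> n \<longrightarrow> le (s i) (s j))
                                  \<and> (\<forall>i>n. s i = undefined)}),
                act = (\<lambda>\<theta> m n s. (\<lambda>i. if i \<le> m then s (\<theta> i) else undefined))\<rparr>"

definition Delta :: "nat \<Rightarrow> (nat \<Rightarrow> nat) sset" where
  "Delta n = nerve {0..n} (\<le>)"

definition horn :: "nat \<Rightarrow> nat \<Rightarrow> nat \<Rightarrow> (nat \<Rightarrow> nat) set" where
  "horn n k m = {s \<in> cells (Delta n) m. insert k (s ` {0..m}) \<noteq> {0..n}}"

definition quasicategory :: "'a sset \<Rightarrow> bool" where
  "quasicategory X \<longleftrightarrow> is_sset X \<and> (\<forall>n k. 0 < k \<longrightarrow> k < n \<longrightarrow> rlp (Delta n) (horn n k) X)"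

definition weakly_closed :: "'a sset \<Rightarrow> 'a set \<Rightarrow> bool" where
  "weakly_closed X W \<longleftrightarrow>
     (\<forall>f. smap (subsset (Delta 2) (horn 2 1)) X f \<longrightarrow> (\<forall>e\<in>horn 2 1 1. f 1 e \<in> W) \<longrightarrow>
        (\<exists>g. smap (Delta 2) X g \<and> (\<forall>n. \<forall>a\<in>horn 2 1 n. g n a = f n a) \<and>
             (\<forall>e\<in>cells (Delta 2) 1. g 1 e \<in> W)))"

definition Lposet :: "nat \<Rightarrow> nat \<Rightarrow> nat set set" where
  "Lposet n k = {A. A \<subseteq> {0..n} \<and> k \<in> A}"

definition L :: "nat \<Rightarrow> nat \<Rightarrow> (nat \<Rightarrow> nat set) sset" where
  "L n k = nerve (Lposet n k) (\<subseteq>)"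

definition Lmark :: "nat \<Rightarrow> nat \<Rightarrow> (nat \<Rightarrow> nat set) set" where
  "Lmark n k = {s \<in> cells (L n k) 1. Max (s 0) = Max (s 1)}"

definition LJ :: "nat \<Rightarrow> nat \<Rightarrow> nat \<Rightarrow> (nat \<Rightarrow> nat set) set" where
  "LJ n k m = {s \<in> cells (L n k) m. \<forall>i\<le>m. s i \<noteq> {0..n}}"

definition R :: "nat \<Rightarrow> nat \<Rightarrow> (nat \<Rightarrow> nat set) sset" where
  "R n k = nerve (Lposet n k) (\<supseteq>)"

definition Rmark :: "nat \<Rightarrow> nat \<Rightarrow> (nat \<Rightarrow> nat set) set" where
  "Rmark n k = {s \<in> cells (R n k) 1. Min (s 0) = Min (s 1)}"

definition RJ :: "nat \<Rightarrow> nat \<Rightarrow> nat \<Rightarrow> (nat \<Rightarrow> nat set) set" where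
  "RJ n k m = {s \<in> cells (R n k) m. \<forall>i\<le>m. s i \<noteq> {0..n}}"

definition CLF :: "'a sset \<Rightarrow> 'a set \<Rightarrow> bool" where
  "CLF X W \<longleftrightarrow> weakly_closed X W \<and>
     (\<forall>n k. 2 \<le> n \<longrightarrow> 0 < k \<longrightarrow> k \<le> n \<longrightarrow> mrlp (L n k) (Lmark n k) (LJ n k) X W)"

definition CRF :: "'a sset \<Rightarrow> 'a set \<Rightarrow> bool" where
  "CRF X W \<longleftrightarrow> weakly_closed X W \<and>
     (\<forall>n k. 2 \<le> n \<longrightarrow> k < n \<longrightarrow> mrlp (R n k) (Rmark n k) (RJ n k) X W)"

definition sdposet :: "nat \<Rightarrow> nat set set" where
  "sdposet n = {A. A \<noteq> {} \<and> A \<subseteq> {0..n}}"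

definition sd :: "nat \<Rightarrow> (nat \<Rightarrow> nat set) sset" where
  "sd n = nerve (sdposet n) (\<subseteq>)"

definition sdmark :: "nat \<Rightarrow> (nat \<Rightarrow> nat set) set" where
  "sdmark n = {s \<in> cells (sd n) 1. Max (s 0) = Max (s 1)}"

definition sdop :: "nat \<Rightarrow> (nat \<Rightarrow> nat set) sset" where
  "sdop n = nerve (sdposet n) (\<supseteq>)"

definition sdopmark :: "nat \<Rightarrow> (nat \<Rightarrow> nat set) set" where
  "sdopmark n = {s \<in> cells (sdop n) 1. Min (s 0) = Min (s 1)}"

text \<open>Generic Ex construction for a cosimplicial family of (nerves of) subset posets, whose
  cosimplicial structure is direct image of subsets. n-simplices are marked maps C n -> (X,W),
  represented extensionally (undefined off the simplices of C n).\<close>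
definition ExGen :: "(nat \<Rightarrow> (nat \<Rightarrow> nat set) sset) \<Rightarrow> (nat \<Rightarrow> (nat \<Rightarrow> nat set) set) \<Rightarrow>
    'a sset \<Rightarrow> 'a set \<Rightarrow> (nat \<Rightarrow> (nat \<Rightarrow> nat set) \<Rightarrow> 'a) sset" where
  "ExGen C M X W =
     \<lparr>cells = (\<lambda>n. {f. marked_map (C n) (M n) X W f \<and>
                       (\<forall>k s. s \<notin> cells (C n) k \<longrightarrow> f k s = undefined)}),
      act = (\<lambda>\<theta> m n f. (\<lambda>k s. if s \<in> cells (C m) k
                                 then f k (\<lambda>i. if i \<le> k then \<theta> ` (s i) else undefined)
                                 else undefined))\<rparr>"

definition Ex_plus :: "'a sset \<Rightarrow> 'a set \<Rightarrow> (nat \<Rightarrow> (nat \<Rightarrow> nat set) \<Rightarrow> 'a) sset" where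
  "Ex_plus X W = ExGen sd sdmark X W"

definition Ex_op_plus :: "'a sset \<Rightarrow> 'a set \<Rightarrow> (nat \<Rightarrow> (nat \<Rightarrow> nat set) \<Rightarrow> 'a) sset" where
  "Ex_op_plus X W = ExGen sdop sdopmark X W"

end

theory Submission
  imports Defs
begin

lemma cells_nerve: "c \<in> cells (nerve P le) m \<longleftrightarrow>
   (\<forall>i\<le>m. c i \<in> P) \<and> (\<forall>i j. i \<le> j \<longrightarrow> j \<le> m \<longrightarrow> le (c i) (c j)) \<and> (\<forall>i>m. c i = undefined)"
  by (simp add: nerve_def)

lemma act_nerve: "act (nerve P le) \<theta> m n c = (\<lambda>i. if i \<le> m then c (\<theta> i) else undefined)"
  by (simp add: nerve_def)

lemma cells_subsset [simp]: "cells (subsset B A) = A"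
  and act_subsset [simp]: "act (subsset B A) = act B"
  and subsset_cells [simp]: "subsset B (cells B) = B"
  by (simp_all add: subsset_def)

lemma act_nerve_cells:
  "mono_map \<theta> m n \<Longrightarrow> c \<in> cells (nerve P le) n \<Longrightarrow> act (nerve P le) \<theta> m n c \<in> cells (nerve P le) m"
  unfolding cells_nerve act_nerve by (auto simp: mono_map_def)

lemma act_nerve_image_subset:
  "mono_map \<theta> p m \<Longrightarrow> act (nerve P le) \<theta> p m c ` {0..p} \<subseteq> c ` {0..m}"
  by (auto simp: act_nerve mono_map_def)

lemma cells_Delta: "s \<in> cells (Delta n) m \<longleftrightarrow>
   (\<forall>i\<le>m. s i \<le> n) \<and> (\<forall>i j. i \<le> j \<longrightarrow> j \<le> m \<longrightarrow> s i \<le> s j) \<and> (\<forall>i>m. s i = undefined)"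
  by (auto simp: Delta_def cells_nerve)

lemma act_Delta: "act (Delta n) \<theta> m k s = (\<lambda>i. if i \<le> m then s (\<theta> i) else undefined)"
  by (simp add: Delta_def act_nerve)

lemma mono_map_Delta_cell: "s \<in> cells (Delta n) m \<Longrightarrow> mono_map s m n"
  by (auto simp: cells_Delta mono_map_def)

lemma rlp_imp_mrlp:
  assumes "rlp B A X" "V \<subseteq> A 1"
  shows "mrlp B V A X W"
  unfolding mrlp_def
proof (intro allI impI)
  fix f assume f: "marked_map (subsset B A) (V \<inter> A 1) X W f"
  then obtain g where g: "smap B X g" "\<forall>n. \<forall>a\<in>A n. g n a = f n a"
    using assms(1) unfolding rlp_def marked_map_def by blast
  have "\<forall>e\<in>V. g 1 e \<in> W"
    using g(2) f assms(2) unfolding marked_map_def by auto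
  with g show "\<exists>g. marked_map B V X W g \<and> (\<forall>n. \<forall>a\<in>A n. g n a = f n a)"
    unfolding marked_map_def by blast
qed

definition nerve_map :: "('p \<Rightarrow> 'q) \<Rightarrow> nat \<Rightarrow> (nat \<Rightarrow> 'p) \<Rightarrow> nat \<Rightarrow> 'q" where
  "nerve_map f m s = (\<lambda>i. if i \<le> m then f (s i) else undefined)"

lemma nerve_map_cells:
  assumes "s \<in> cells (nerve P le) m"
    and "\<And>i. i \<le> m \<Longrightarrow> f (s i) \<in> Q"
    and "\<And>i j. i \<le> j \<Longrightarrow> j \<le> m \<Longrightarrow> le' (f (s i)) (f (s j))"
  shows "nerve_map f m s \<in> cells (nerve Q le') m"
  using assms by (simp add: cells_nerve nerve_map_def)

lemma nerve_map_act:
  "mono_map \<theta> p m \<Longrightarrow>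
     nerve_map f p (act (nerve P le) \<theta> p m s) = act (nerve Q le') \<theta> p m (nerve_map f m s)"
  by (auto simp: nerve_map_def act_nerve mono_map_def)

lemma image_nerve_map: "nerve_map f m s ` {0..m} = f ` s ` {0..m}"
  by (auto simp: nerve_map_def)

lemma nerve_map_nerve_map: "nerve_map g m (nerve_map f m s) = nerve_map (g \<circ> f) m s"
  by (auto simp: nerve_map_def)

lemma nerve_map_fixed:
  "s \<in> cells (nerve P le) m \<Longrightarrow> (\<And>i. i \<le> m \<Longrightarrow> f (s i) = s i) \<Longrightarrow> nerve_map f m s = s"
  by (auto simp: nerve_map_def cells_nerve)

lemma nerve_map_id [simp]: "s \<in> cells (nerve P le) m \<Longrightarrow> nerve_map id m s = s"
  by (rule nerve_map_fixed) auto

lemma marked_map_nerve_map: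
  assumes G: "marked_map (subsset (nerve Q le') B) MB X W G"
    and into: "\<And>m s. s \<in> A m \<Longrightarrow> nerve_map f m s \<in> B m"
    and marks: "\<And>s. s \<in> MA \<Longrightarrow> nerve_map f 1 s \<in> MB"
  shows "marked_map (subsset (nerve P le) A) MA X W (\<lambda>m s. G m (nerve_map f m s))"
proof -
  have cells: "G m x \<in> cells X m" if "x \<in> B m" for m x
    using G that unfolding marked_map_def smap_def by simp
  have nat: "G p (act (nerve Q le') \<theta> p m x) = act X \<theta> p m (G m x)"
    if "mono_map \<theta> p m" "x \<in> B m" for \<theta> p m x
    using G that unfolding marked_map_def smap_def cells_subsset act_subsset by blast
  have mk: "G 1 x \<in> W" if "x \<in> MB" for x
    using G that unfolding marked_map_def by blast
  show ?thesis
    unfolding marked_map_def smap_def cells_subsset act_subsset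
    using cells nat mk into marks nerve_map_act[of _ _ _ f P le _ Q le'] by simp
qed

definition spanned :: "('p \<Rightarrow> 'p \<Rightarrow> bool) \<Rightarrow> 'p set \<Rightarrow> 'p set set \<Rightarrow> nat \<Rightarrow> (nat \<Rightarrow> 'p) set" where
  "spanned le P D m = {c \<in> cells (nerve P le) m. c ` {0..m} \<in> D}"

definition marked_map_on ::
    "('p \<Rightarrow> 'p \<Rightarrow> bool) \<Rightarrow> 'p set \<Rightarrow> (nat \<Rightarrow> 'p) set \<Rightarrow> 'p set set \<Rightarrow>
     'a sset \<Rightarrow> 'a set \<Rightarrow> (nat \<Rightarrow> (nat \<Rightarrow> 'p) \<Rightarrow> 'a) \<Rightarrow> bool" where
  "marked_map_on le P M D X W G \<longleftrightarrow>
     marked_map (subsset (nerve P le) (spanned le P D)) (M \<inter> spanned le P D 1) X W G"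

definition face_closed :: "('p \<Rightarrow> 'p \<Rightarrow> bool) \<Rightarrow> 'p set \<Rightarrow> 'p set set \<Rightarrow> bool" where
  "face_closed le P D \<longleftrightarrow>
     (\<forall>m c C. c \<in> spanned le P D m \<longrightarrow> C \<subseteq> c ` {0..m} \<longrightarrow> C \<noteq> {} \<longrightarrow> C \<in> D)"

lemma spanned_iff: "c \<in> spanned le P D m \<longleftrightarrow> c \<in> cells (nerve P le) m \<and> c ` {0..m} \<in> D"
  by (simp add: spanned_def)

lemma spanned_mono: "D \<subseteq> D' \<Longrightarrow> spanned le P D m \<subseteq> spanned le P D' m"
  by (auto simp: spanned_def)

lemma spanned_UNIV: "spanned le P UNIV = cells (nerve P le)"
  by (auto simp: spanned_def)

lemma face_closed_subsets: "face_closed le P {C. C \<subseteq> S}"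
  unfolding face_closed_def spanned_def mem_Collect_eq by (meson order_trans)

lemma act_spanned:
  assumes D: "face_closed le P D" and c: "c \<in> spanned le P D m" and \<theta>: "mono_map \<theta> p m"
  shows "act (nerve P le) \<theta> p m c \<in> spanned le P D p"
proof -
  have "C \<in> D" if "C \<subseteq> c ` {0..m}" "C \<noteq> {}" for C
    using D c that unfolding face_closed_def by blast
  then have "act (nerve P le) \<theta> p m c ` {0..p} \<in> D"
    using act_nerve_image_subset[OF \<theta>, of P le c] by simp
  moreover have "act (nerve P le) \<theta> p m c \<in> cells (nerve P le) p"
    using c act_nerve_cells[OF \<theta>] unfolding spanned_iff by blast
  ultimately show ?thesis by (simp add: spanned_iff)
qed

lemma marked_map_on_mono:
  assumes "marked_map_on le P M D' X W G" "\<And>m. spanned le P D m \<subseteq> spanned le P D' m"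
  shows "marked_map_on le P M D X W G"
  using assms unfolding marked_map_on_def marked_map_def smap_def by (simp add: subset_iff)

lemma marked_map_on_glue:
  assumes G: "marked_map_on le P M D X W G" and H: "marked_map_on le P M D' X W H"
    and D: "face_closed le P D" and D': "face_closed le P D'"
    and agree: "\<And>m c. c \<in> spanned le P D m \<Longrightarrow> c \<in> spanned le P D' m \<Longrightarrow> G m c = H m c"
  shows "marked_map_on le P M (D \<union> D') X W (\<lambda>m c. if c ` {0..m} \<in> D then G m c else H m c)"
    (is "marked_map_on le P M (D \<union> D') X W ?G")
proof -
  have G': "G m c \<in> cells X m" "\<And>\<theta> p. mono_map \<theta> p m \<Longrightarrow>
      G p (act (nerve P le) \<theta> p m c) = act X \<theta> p m (G m c)" if "c \<in> spanned le P D m" for m c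
    using G that unfolding marked_map_on_def marked_map_def smap_def by auto
  have H': "H m c \<in> cells X m" "\<And>\<theta> p. mono_map \<theta> p m \<Longrightarrow>
      H p (act (nerve P le) \<theta> p m c) = act X \<theta> p m (H m c)" if "c \<in> spanned le P D' m" for m c
    using H that unfolding marked_map_on_def marked_map_def smap_def by auto
  have split: "c \<in> spanned le P D m \<and> c ` {0..m} \<in> D \<or> c \<in> spanned le P D' m \<and> c ` {0..m} \<notin> D"
    if "c \<in> spanned le P (D \<union> D') m" for m c
    using that by (auto simp: spanned_def)
  show ?thesis
    unfolding marked_map_on_def marked_map_def smap_def
  proof (intro conjI allI impI ballI)
    fix m c assume "c \<in> cells (subsset (nerve P le) (spanned le P (D \<union> D'))) m"
    then consider "c \<in> spanned le P D m" "c ` {0..m} \<in> D" | "c \<in> spanned le P D' m" "c ` {0..m} \<notin> D"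
      using split by auto
    then show "?G m c \<in> cells X m" by cases (simp_all add: G'(1) H'(1))
  next
    fix \<theta> p m c assume \<theta>: "mono_map \<theta> p m"
      and "c \<in> cells (subsset (nerve P le) (spanned le P (D \<union> D'))) m"
    then consider "c \<in> spanned le P D m" "c ` {0..m} \<in> D" | "c \<in> spanned le P D' m" "c ` {0..m} \<notin> D"
      using split by auto
    then show "?G p (act (subsset (nerve P le) (spanned le P (D \<union> D'))) \<theta> p m c) = act X \<theta> p m (?G m c)"
    proof cases
      case 1
      have "act (nerve P le) \<theta> p m c ` {0..p} \<in> D"
        using act_spanned[OF D 1(1) \<theta>] by (simp add: spanned_iff)
      then show ?thesis using G'(2)[OF 1(1) \<theta>] 1(2) by simp
    next
      case 2
      have face: "act (nerve P le) \<theta> p m c \<in> spanned le P D' p" by (rule act_spanned[OF D' 2(1) \<theta>])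
      have "?G p (act (nerve P le) \<theta> p m c) = H p (act (nerve P le) \<theta> p m c)"
        using agree[OF _ face] face by (auto simp: spanned_iff)
      moreover have "?G m c = H m c" using 2(2) by simp
      ultimately show ?thesis using H'(2)[OF 2(1) \<theta>] by (simp only: act_subsset)
    qed
  next
    fix e assume e: "e \<in> M \<inter> spanned le P (D \<union> D') 1"
    show "?G 1 e \<in> W"
    proof (cases "e ` {0..1} \<in> D")
      case True
      then have "e \<in> M \<inter> spanned le P D 1" using e split[of e 1] by blast
      then show ?thesis using G True by (simp add: marked_map_on_def marked_map_def)
    next
      case False
      then have "e \<in> M \<inter> spanned le P D' 1" using e split[of e 1] by blast
      then show ?thesis using H False by (simp add: marked_map_on_def marked_map_def)
    qed
  qed
qed


lemma marked_map_on_extend: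
  assumes e_in: "\<And>a. a \<in> Ks \<Longrightarrow> e a \<in> P"
    and e_ord: "\<And>a b. a \<in> Ks \<Longrightarrow> b \<in> Ks \<Longrightarrow> le (e a) (e b) \<longleftrightarrow> leK a b"
    and G: "marked_map_on le P M D X W G" and D: "face_closed le P D"
    and pattern: "\<And>m s. s \<in> cells (nerve Ks leK) m \<Longrightarrow> e ` s ` {0..m} \<in> D \<longleftrightarrow> s \<in> DK m"
    and DK: "\<And>m. DK m \<subseteq> cells (nerve Ks leK) m"
    and marks: "\<And>s. s \<in> cells (nerve Ks leK) 1 \<Longrightarrow> s \<in> VK \<longleftrightarrow> nerve_map e 1 s \<in> M"
    and lift: "mrlp (nerve Ks leK) VK DK X W"
  shows "\<exists>G'. marked_map_on le P M (D \<union> {C. C \<subseteq> e ` Ks}) X W G' \<and>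
              (\<forall>m. \<forall>c\<in>spanned le P D m. G' m c = G m c)"
proof -
  let ?K = "nerve Ks leK"
  define ei where "ei = inv_into Ks e"
  have e_cells: "nerve_map e m s \<in> cells (nerve P le) m" if "s \<in> cells ?K m" for m s
    using that by (intro nerve_map_cells) (auto simp: cells_nerve e_in e_ord)
  have inv_cells: "nerve_map ei m c \<in> cells ?K m"
    and e_inv: "nerve_map e m (nerve_map ei m c) = c"
    if c: "c \<in> cells (nerve P le) m" "c ` {0..m} \<subseteq> e ` Ks" for m c
  proof -
    have ci: "ei (c i) \<in> Ks" "e (ei (c i)) = c i" if "i \<le> m" for i
    proof -
      have "c i \<in> e ` Ks" using that c(2) by auto
      then show "ei (c i) \<in> Ks" "e (ei (c i)) = c i"
        unfolding ei_def by (simp_all add: inv_into_into f_inv_into_f)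
    qed
    show "nerve_map ei m c \<in> cells ?K m"
    proof (rule nerve_map_cells[OF c(1)])
      fix i j assume ij: "i \<le> j" "j \<le> m"
      then have "le (e (ei (c i))) (e (ei (c j)))" using c(1) ci by (simp add: cells_nerve)
      moreover have "ei (c i) \<in> Ks" "ei (c j) \<in> Ks" using ci ij by auto
      ultimately show "leK (ei (c i)) (ei (c j))" using e_ord by blast
    qed (use ci in simp)
    show "nerve_map e m (nerve_map ei m c) = c"
      unfolding nerve_map_nerve_map using c(1) ci by (intro nerve_map_fixed) auto
  qed
  have restrict: "marked_map (subsset ?K DK) (VK \<inter> DK 1) X W (\<lambda>m s. G m (nerve_map e m s))"
  proof (rule marked_map_nerve_map[OF G[unfolded marked_map_on_def]])
    show "nerve_map e m s \<in> spanned le P D m" if "s \<in> DK m" for m s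
    proof -
      have s: "s \<in> cells ?K m" using that DK by blast
      show ?thesis using e_cells[OF s] pattern[OF s] that by (simp add: spanned_iff image_nerve_map)
    qed
    show "nerve_map e 1 s \<in> M \<inter> spanned le P D 1" if "s \<in> VK \<inter> DK 1" for s
    proof -
      have s: "s \<in> cells ?K 1" using that DK by blast
      show ?thesis
        using e_cells[OF s] pattern[OF s] marks[OF s] that by (simp add: spanned_iff image_nerve_map)
    qed
  qed
  obtain g where g: "marked_map ?K VK X W g"
    and g_ext: "\<And>m s. s \<in> DK m \<Longrightarrow> g m s = G m (nerve_map e m s)"
    using lift restrict unfolding mrlp_def by blast
  define H where "H m c = g m (nerve_map ei m c)" for m c
  have g': "marked_map (subsset ?K (cells ?K)) VK X W g" using g by simp
  have H: "marked_map_on le P M {C. C \<subseteq> e ` Ks} X W H"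
    unfolding marked_map_on_def H_def
  proof (rule marked_map_nerve_map[OF g'])
    show "nerve_map ei m c \<in> cells ?K m" if "c \<in> spanned le P {C. C \<subseteq> e ` Ks} m" for m c
      using that inv_cells by (simp add: spanned_iff)
    show "nerve_map ei 1 c \<in> VK" if "c \<in> M \<inter> spanned le P {C. C \<subseteq> e ` Ks} 1" for c
      using that marks inv_cells e_inv by (auto simp: spanned_iff)
  qed
  have agree: "G m c = H m c"
    if "c \<in> spanned le P D m" "c \<in> spanned le P {C. C \<subseteq> e ` Ks} m" for m c
  proof -
    have c: "c \<in> cells (nerve P le) m" "c ` {0..m} \<subseteq> e ` Ks" "c ` {0..m} \<in> D"
      using that by (auto simp: spanned_iff)
    have "e ` nerve_map ei m c ` {0..m} = c ` {0..m}"
      using e_inv[OF c(1,2)] image_nerve_map[of e m "nerve_map ei m c"] by simp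
    then have "nerve_map ei m c \<in> DK m" using pattern[OF inv_cells[OF c(1,2)]] c(3) by simp
    then show ?thesis using g_ext e_inv[OF c(1,2)] by (simp add: H_def)
  qed
  show ?thesis
    using marked_map_on_glue[OF G H D face_closed_subsets agree] by (auto simp: spanned_iff)
qed


lemma marked_map_nerve_cong:
  assumes "\<And>m s. s \<in> cells (nerve P le) m \<Longrightarrow> F m s = F' m s" "V \<subseteq> cells (nerve P le) 1"
  shows "marked_map (nerve P le) V X W F \<longleftrightarrow> marked_map (nerve P le) V X W F'"
proof -
  have "smap (nerve P le) X F \<longleftrightarrow> smap (nerve P le) X F'"
    unfolding smap_def using assms(1) act_nerve_cells[of _ _ _ _ P le] by simp
  moreover have "F 1 e = F' 1 e" if "e \<in> V" for e using assms that by blast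
  then have "(\<forall>e\<in>V. F 1 e \<in> W) \<longleftrightarrow> (\<forall>e\<in>V. F' 1 e \<in> W)" by simp
  ultimately show ?thesis by (simp add: marked_map_def)
qed

definition retract_to :: "nat set \<Rightarrow> nat \<Rightarrow> nat" where
  "retract_to S i = (if \<exists>x\<in>S. x \<le> i then Max {x\<in>S. x \<le> i} else Min S)"

definition retract_simplex :: "nat \<Rightarrow> nat set \<Rightarrow> nat \<Rightarrow> nat" where
  "retract_simplex n S = (\<lambda>i. if i \<le> n then retract_to S i else undefined)"

lemma retract_to_in:
  assumes "finite S" "S \<noteq> {}"
  shows "retract_to S i \<in> S"
proof (cases "\<exists>x\<in>S. x \<le> i")
  case True
  then have "Max {x\<in>S. x \<le> i} \<in> {x\<in>S. x \<le> i}" using assms(1) by (intro Max_in) auto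
  then show ?thesis using True by (simp add: retract_to_def)
next
  case False
  then show ?thesis using Min_in[OF assms] by (simp add: retract_to_def)
qed

lemma retract_to_fixed: "finite S \<Longrightarrow> x \<in> S \<Longrightarrow> retract_to S x = x"
  unfolding retract_to_def by (auto intro!: Max_eqI)

lemma retract_to_mono:
  assumes "finite S" "S \<noteq> {}" "i \<le> j"
  shows "retract_to S i \<le> retract_to S j"
proof (cases "\<exists>x\<in>S. x \<le> i")
  case True
  then have "\<exists>x\<in>S. x \<le> j" using assms(3) by (meson order_trans)
  moreover have "{x\<in>S. x \<le> i} \<subseteq> {x\<in>S. x \<le> j}" using assms(3) by auto
  ultimately show ?thesis using True assms(1) unfolding retract_to_def by (auto intro!: Max_mono)
next
  case False
  then show ?thesis
    using retract_to_in[OF assms(1,2), of j] Min_le[OF assms(1)] unfolding retract_to_def by auto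
qed

lemma retract_simplex_cells:
  assumes "S \<subseteq> {0..n}" "S \<noteq> {}"
  shows "retract_simplex n S \<in> cells (Delta n) n"
proof -
  have fin: "finite S" using assms(1) finite_subset by blast
  have "retract_to S i \<le> n" for i
    using retract_to_in[OF fin assms(2), of i] assms(1) by (meson atLeastAtMost_iff subsetD)
  then show ?thesis
    using retract_to_mono[OF fin assms(2)] unfolding cells_Delta retract_simplex_def by auto
qed

lemma retract_simplex_fixed: "S \<subseteq> {0..n} \<Longrightarrow> x \<in> S \<Longrightarrow> retract_simplex n S x = x"
  using retract_to_fixed[of S x] finite_subset[of S "{0..n}"] by (auto simp: retract_simplex_def)

lemma image_retract_simplex:
  assumes "S \<subseteq> {0..n}" "S \<noteq> {}"
  shows "retract_simplex n S ` {0..n} = S"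
proof
  have "finite S" using assms(1) finite_subset by blast
  then show "retract_simplex n S ` {0..n} \<subseteq> S"
    using retract_to_in[OF _ assms(2)] by (auto simp: retract_simplex_def)
  show "S \<subseteq> retract_simplex n S ` {0..n}"
  proof
    fix x assume "x \<in> S"
    then have "retract_simplex n S x = x" "x \<in> {0..n}"
      using retract_simplex_fixed[OF assms(1)] assms(1) by auto
    then show "x \<in> retract_simplex n S ` {0..n}" by (metis imageI)
  qed
qed

definition horn_chains :: "nat \<Rightarrow> nat \<Rightarrow> nat set set set" where
  "horn_chains n k = {C. \<Union>C \<union> {k} \<noteq> {0..n}}"

lemma retract_simplex_horn:
  assumes "S \<subseteq> {0..n}" "k \<in> S" "S \<noteq> {0..n}"
  shows "retract_simplex n S \<in> horn n k n"
proof -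
  have "S \<noteq> {}" using assms(2) by auto
  then have "insert k (retract_simplex n S ` {0..n}) = S"
    using image_retract_simplex[OF assms(1)] assms(2) by auto
  then show ?thesis using retract_simplex_cells[OF assms(1) \<open>S \<noteq> {}\<close>] assms(3) by (simp add: horn_def)
qed

section \<open>Marked subdivisions and marked Ex\<close>

lemma mono_on_Max_commute:
  fixes \<theta> :: "nat \<Rightarrow> nat"
  assumes "mono_on A \<theta>" "finite A" "A \<noteq> {}"
  shows "Max (\<theta> ` A) = \<theta> (Max A)"
proof (rule Max_eqI)
  fix y assume "y \<in> \<theta> ` A"
  then show "y \<le> \<theta> (Max A)"
    using mono_onD[OF assms(1)] Max_in[OF assms(2,3)] Max_ge[OF assms(2)] by auto
qed (use assms Max_in in auto)

lemma mono_on_Min_commute: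
  fixes \<theta> :: "nat \<Rightarrow> nat"
  assumes "mono_on A \<theta>" "finite A" "A \<noteq> {}"
  shows "Min (\<theta> ` A) = \<theta> (Min A)"
proof (rule Min_eqI)
  fix y assume "y \<in> \<theta> ` A"
  then show "\<theta> (Min A) \<le> y"
    using mono_onD[OF assms(1)] Min_in[OF assms(2,3)] Min_le[OF assms(2)] by auto
qed (use assms Min_in in auto)

text \<open>The two variants: \<open>sd\<^sub>+\<close> is the case \<open>(\<subseteq>, Max)\<close>, \<open>sd\<^sup>o\<^sup>p\<^sub>+\<close> the case \<open>(\<supseteq>, Min)\<close>.\<close>

locale subdivision =
  fixes le :: "nat set \<Rightarrow> nat set \<Rightarrow> bool" and mu :: "nat set \<Rightarrow> nat"
  assumes le_mu_cases: "(le = (\<subseteq>) \<and> mu = Max) \<or> (le = (\<supseteq>) \<and> mu = Min)"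
begin

definition Sd :: "nat \<Rightarrow> (nat \<Rightarrow> nat set) sset" where
  "Sd n = nerve (sdposet n) le"

definition Sd_mark :: "nat \<Rightarrow> (nat \<Rightarrow> nat set) set" where
  "Sd_mark n = {s \<in> cells (Sd n) 1. mu (s 0) = mu (s 1)}"

definition Ex :: "'a sset \<Rightarrow> 'a set \<Rightarrow> (nat \<Rightarrow> (nat \<Rightarrow> nat set) \<Rightarrow> 'a) sset" where
  "Ex X W = ExGen Sd Sd_mark X W"

abbreviation sd_map :: "(nat \<Rightarrow> nat) \<Rightarrow> nat \<Rightarrow> (nat \<Rightarrow> nat set) \<Rightarrow> nat \<Rightarrow> nat set" where
  "sd_map \<theta> \<equiv> nerve_map ((`) \<theta>)"

lemma cells_Sd: "s \<in> cells (Sd n) k \<longleftrightarrow> (\<forall>i\<le>k. s i \<noteq> {} \<and> s i \<subseteq> {0..n}) \<and>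
   (\<forall>i j. i \<le> j \<longrightarrow> j \<le> k \<longrightarrow> le (s i) (s j)) \<and> (\<forall>i>k. s i = undefined)"
  by (auto simp: Sd_def cells_nerve sdposet_def)

lemma mu_image:
  assumes "mono_on A \<theta>" "finite A" "A \<noteq> {}"
  shows "mu (\<theta> ` A) = \<theta> (mu A)"
  using le_mu_cases mono_on_Max_commute[OF assms] mono_on_Min_commute[OF assms] by auto

lemma sd_map_cells:
  assumes \<theta>: "mono_map \<theta> m n" and s: "s \<in> cells (Sd m) k"
  shows "sd_map \<theta> k s \<in> cells (Sd n) k"
  unfolding Sd_def
proof (rule nerve_map_cells[OF s[unfolded Sd_def]])
  fix i assume "i \<le> k"
  then have "s i \<noteq> {}" "s i \<subseteq> {0..m}" using s by (auto simp: cells_Sd)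
  then show "\<theta> ` s i \<in> sdposet n" using \<theta> by (auto simp: sdposet_def mono_map_def)
next
  fix i j assume "i \<le> j" "j \<le> k"
  then have "le (s i) (s j)" using s by (auto simp: cells_Sd)
  then show "le (\<theta> ` s i) (\<theta> ` s j)" using le_mu_cases by (auto simp: image_mono)
qed

lemma sd_map_mark:
  assumes \<theta>: "mono_map \<theta> m n" and s: "s \<in> Sd_mark m"
  shows "sd_map \<theta> 1 s \<in> Sd_mark n"
proof -
  have s1: "s \<in> cells (Sd m) 1" "mu (s 0) = mu (s 1)" using s by (auto simp: Sd_mark_def)
  have "mu (\<theta> ` s i) = \<theta> (mu (s i))" if "i \<le> 1" for i
  proof (rule mu_image)
    have "s i \<subseteq> {0..m}" "s i \<noteq> {}" using s1(1) that by (auto simp: cells_Sd)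
    then show "mono_on (s i) \<theta>" "finite (s i)" "s i \<noteq> {}"
      using \<theta> by (auto simp: mono_map_def mono_on_def intro: finite_subset)
  qed
  then show ?thesis
    using sd_map_cells[OF \<theta> s1(1)] s1(2) by (simp add: Sd_mark_def nerve_map_def)
qed

lemma sd_map_cong:
  assumes "s \<in> cells (Sd m) k" "\<And>i. i \<le> m \<Longrightarrow> \<theta> i = \<theta>' i"
  shows "sd_map \<theta> k s = sd_map \<theta>' k s"
proof -
  have "\<theta> ` s i = \<theta>' ` s i" if "i \<le> k" for i
  proof (rule image_cong)
    fix x assume "x \<in> s i"
    then have "x \<le> m" using assms(1) that unfolding cells_Sd by (meson atLeastAtMost_iff subsetD)
    then show "\<theta> x = \<theta>' x" by (rule assms(2))
  qed simp
  then show ?thesis by (simp add: nerve_map_def fun_eq_iff)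
qed

lemma sd_map_fixed:
  assumes "s \<in> cells (Sd n) k" "\<And>i. i \<le> k \<Longrightarrow> \<forall>x\<in>s i. \<theta> x = x"
  shows "sd_map \<theta> k s = s"
  using assms(1) unfolding Sd_def by (rule nerve_map_fixed) (use assms(2) in simp)

lemma sd_map_sd_map: "sd_map \<eta> k (sd_map \<theta> k s) = sd_map (\<eta> \<circ> \<theta>) k s"
  by (simp add: nerve_map_nerve_map comp_def image_image)

lemma sd_map_act_Delta:
  assumes "d \<in> cells (Sd p) j"
  shows "sd_map (act (Delta n) \<theta> p m s) j d = sd_map s j (sd_map \<theta> j d)"
  unfolding sd_map_sd_map using assms by (rule sd_map_cong) (simp add: act_Delta)

lemma sd_map_retract:
  assumes "d \<in> cells (Sd n') j" "S \<subseteq> {0..n}" "\<And>i. i \<le> j \<Longrightarrow> d i \<subseteq> S"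
  shows "sd_map (retract_simplex n S) j d = d"
  using assms(1) by (rule sd_map_fixed) (use assms(2,3) retract_simplex_fixed in blast)

lemma cells_Ex: "f \<in> cells (Ex X W) n \<longleftrightarrow> marked_map (Sd n) (Sd_mark n) X W f \<and>
    (\<forall>k s. s \<notin> cells (Sd n) k \<longrightarrow> f k s = undefined)"
  by (simp add: Ex_def ExGen_def)

lemma act_Ex: "act (Ex X W) \<theta> m n f =
    (\<lambda>k s. if s \<in> cells (Sd m) k then f k (sd_map \<theta> k s) else undefined)"
  by (simp add: Ex_def ExGen_def nerve_map_def fun_eq_iff)

lemma act_Ex_cells:
  assumes \<theta>: "mono_map \<theta> m n" and f: "f \<in> cells (Ex X W) n"
  shows "act (Ex X W) \<theta> m n f \<in> cells (Ex X W) m"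
proof -
  have "marked_map (subsset (Sd n) (cells (Sd n))) (Sd_mark n) X W f" using f by (simp add: cells_Ex)
  then have "marked_map (subsset (Sd m) (cells (Sd m))) (Sd_mark m) X W (\<lambda>k s. f k (sd_map \<theta> k s))"
    unfolding Sd_def by (rule marked_map_nerve_map) (use sd_map_cells[OF \<theta>] sd_map_mark[OF \<theta>] in \<open>simp_all add: Sd_def\<close>)
  moreover have "marked_map (Sd m) (Sd_mark m) X W
      (\<lambda>k s. if s \<in> cells (Sd m) k then f k (sd_map \<theta> k s) else undefined) \<longleftrightarrow>
    marked_map (Sd m) (Sd_mark m) X W (\<lambda>k s. f k (sd_map \<theta> k s))"
    unfolding Sd_def by (rule marked_map_nerve_cong) (auto simp: Sd_mark_def Sd_def)
  ultimately show ?thesis unfolding cells_Ex act_Ex by simp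
qed

lemma is_sset_Ex: "is_sset (Ex X W)"
  unfolding is_sset_def
proof (intro conjI allI impI)
  fix n x assume "x \<in> cells (Ex X W) n"
  then show "act (Ex X W) id n n x = x"
    unfolding act_Ex fun_eq_iff by (auto simp: cells_Ex Sd_def)
next
  fix \<theta> \<eta> m n p x assume "mono_map \<theta> m n" "mono_map \<eta> n p" "x \<in> cells (Ex X W) p"
  then show "act (Ex X W) \<theta> m n (act (Ex X W) \<eta> n p x) = act (Ex X W) (\<eta> \<circ> \<theta>) m p x"
    unfolding act_Ex fun_eq_iff by (auto simp: sd_map_cells sd_map_sd_map)
next
  fix \<theta> \<theta>' :: "nat \<Rightarrow> nat" and m n x
  assume "mono_map \<theta> m n" "\<forall>i\<le>m. \<theta> i = \<theta>' i" "x \<in> cells (Ex X W) n"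
  then show "act (Ex X W) \<theta> m n x = act (Ex X W) \<theta>' m n x"
    unfolding act_Ex fun_eq_iff using sd_map_cong[of _ m _ \<theta> \<theta>'] by auto
qed (rule act_Ex_cells)


lemma sd_map_horn_chains:
  assumes s: "s \<in> horn N k m" and d: "d \<in> cells (Sd m) j" and k: "k \<le> N"
  shows "sd_map s j d \<in> spanned le (sdposet N) (horn_chains N k) j"
proof -
  have sc: "s \<in> cells (Delta N) m" using s by (simp add: horn_def)
  have "sd_map s j d i \<subseteq> s ` {0..m}" if "i \<le> j" for i
    using d that unfolding nerve_map_def cells_Sd by (simp add: image_mono)
  then have "\<Union>(sd_map s j d ` {0..j}) \<union> {k} \<subseteq> s ` {0..m} \<union> {k}" by fastforce
  moreover have "s ` {0..m} \<union> {k} \<noteq> {0..N}" using s by (simp add: horn_def)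
  moreover have "s ` {0..m} \<union> {k} \<subseteq> {0..N}" using sc k unfolding cells_Delta by auto
  ultimately have "\<Union>(sd_map s j d ` {0..j}) \<union> {k} \<noteq> {0..N}" by blast
  then show ?thesis
    using sd_map_cells[OF mono_map_Delta_cell[OF sc] d]
    by (simp add: spanned_iff horn_chains_def Sd_def)
qed

lemma smap_into_Ex:
  assumes F: "marked_map_on le (sdposet n) (Sd_mark n) D X W F"
    and A: "\<And>m. A m \<subseteq> cells (Delta n) m"
    and AD: "\<And>m s j d. s \<in> A m \<Longrightarrow> d \<in> cells (Sd m) j \<Longrightarrow> sd_map s j d ` {0..j} \<in> D"
  shows "smap (subsset (Delta n) A) (Ex X W)
           (\<lambda>m s j d. if d \<in> cells (Sd m) j then F j (sd_map s j d) else undefined)"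
    (is "smap _ _ ?g")
proof -
  have F': "marked_map (subsset (nerve (sdposet n) le) (spanned le (sdposet n) D))
      (Sd_mark n \<inter> spanned le (sdposet n) D 1) X W F"
    using F by (simp add: marked_map_on_def)
  have into: "sd_map s j d \<in> spanned le (sdposet n) D j" if "s \<in> A m" "d \<in> cells (Sd m) j" for s m j d
    using sd_map_cells[OF mono_map_Delta_cell that(2)] A AD[OF that] that(1)
    by (auto simp: spanned_iff Sd_def)
  have cells: "?g m s \<in> cells (Ex X W) m" if s: "s \<in> A m" for m s
  proof -
    have "marked_map (subsset (nerve (sdposet m) le) (cells (nerve (sdposet m) le))) (Sd_mark m) X W
        (\<lambda>j d. F j (sd_map s j d))"
    proof (rule marked_map_nerve_map[OF F'])
      show "sd_map s j d \<in> spanned le (sdposet n) D j" if "d \<in> cells (nerve (sdposet m) le) j" for j d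
        using into[OF s] that by (simp add: Sd_def)
      show "sd_map s 1 d \<in> Sd_mark n \<inter> spanned le (sdposet n) D 1" if "d \<in> Sd_mark m" for d
      proof
        have "s \<in> cells (Delta n) m" using s A by blast
        then show "sd_map s 1 d \<in> Sd_mark n" using sd_map_mark[OF mono_map_Delta_cell that] by blast
        show "sd_map s 1 d \<in> spanned le (sdposet n) D 1"
          using into[OF s] that by (simp add: Sd_mark_def)
      qed
    qed
    moreover have "marked_map (Sd m) (Sd_mark m) X W (?g m s) \<longleftrightarrow>
        marked_map (Sd m) (Sd_mark m) X W (\<lambda>j d. F j (sd_map s j d))"
      unfolding Sd_def by (rule marked_map_nerve_cong) (auto simp: Sd_mark_def Sd_def)
    ultimately show ?thesis by (simp add: cells_Ex Sd_def)
  qed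
  have nat: "?g p (act (Delta n) \<theta> p m s) = act (Ex X W) \<theta> p m (?g m s)"
    if \<theta>: "mono_map \<theta> p m" for \<theta> p m s
    unfolding act_Ex fun_eq_iff by (simp add: sd_map_cells[OF \<theta>] sd_map_act_Delta)
  show ?thesis
    unfolding smap_def cells_subsset act_subsset using cells nat by blast
qed

lemma smap_Ex_face:
  assumes f: "smap (subsset (Delta n) A) (Ex X W) f"
    and s: "s \<in> cells (Delta n) m" and r: "r \<in> A n" and fixed: "\<And>i. i \<le> m \<Longrightarrow> r (s i) = s i"
    and d: "d \<in> cells (Sd m) j"
  shows "f m s j d = f n r j (sd_map s j d)"
proof -
  have "act (Delta n) s m n r = s" using fixed s unfolding act_Delta cells_Delta by (auto simp: fun_eq_iff)
  then have "f m s = act (Ex X W) s m n (f n r)"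
    using f mono_map_Delta_cell[OF s] r unfolding smap_def by (metis act_subsset cells_subsset)
  then show ?thesis using d by (simp add: act_Ex)
qed

lemma horn_retract_value:
  assumes f: "smap (subsset (Delta n) (horn n k)) (Ex X W) f"
    and S: "S \<subseteq> S'" "S' \<subseteq> {0..n}" "k \<in> S" "S' \<noteq> {0..n}"
    and c: "c \<in> cells (Sd n) j" "\<And>i. i \<le> j \<Longrightarrow> c i \<subseteq> S"
  shows "f n (retract_simplex n S) j c = f n (retract_simplex n S') j c"
proof -
  have S_n: "S \<subseteq> {0..n}" "S \<noteq> {}" using S by auto
  have "f n (retract_simplex n S) j c = f n (retract_simplex n S') j (sd_map (retract_simplex n S) j c)"
  proof (rule smap_Ex_face[OF f retract_simplex_cells[OF S_n] _ _ c(1)])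
    show "retract_simplex n S' \<in> horn n k n" using S by (intro retract_simplex_horn) auto
    fix i assume "i \<le> n"
    then have "retract_simplex n S i \<in> S" using image_retract_simplex[OF S_n] by auto
    then show "retract_simplex n S' (retract_simplex n S i) = retract_simplex n S i"
      using S retract_simplex_fixed[of S' n] by auto
  qed
  then show ?thesis using sd_map_retract[OF c(1) S_n(1) c(2)] by simp
qed

lemma horn_to_sd:
  assumes f: "smap (subsset (Delta n) (horn n k)) (Ex X W) f" and k: "k \<le> n"
  obtains F where "marked_map_on le (sdposet n) (Sd_mark n) (horn_chains n k) X W F"
    and "\<And>m s j d. s \<in> horn n k m \<Longrightarrow> d \<in> cells (Sd m) j \<Longrightarrow> f m s j d = F j (sd_map s j d)"
proof -
  define hull where "hull j c = \<Union>(c ` {0..j}) \<union> {k}" for j and c :: "nat \<Rightarrow> nat set"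
  define F where "F j c = f n (retract_simplex n (hull j c)) j c" for j c
  let ?H = "spanned le (sdposet n) (horn_chains n k)"
  have hull: "hull j c \<subseteq> {0..n}" "k \<in> hull j c" "hull j c \<noteq> {0..n}" if "c \<in> ?H j" for j c
    using that k unfolding hull_def spanned_iff horn_chains_def cells_nerve sdposet_def by auto
  have c_hull: "c i \<subseteq> hull j c" if "i \<le> j" for i j c using that by (auto simp: hull_def)
  have H_Sd: "c \<in> cells (Sd n) j" if "c \<in> ?H j" for c j using that by (simp add: spanned_iff Sd_def)
  have fS: "marked_map (Sd n) (Sd_mark n) X W (f n (retract_simplex n S))"
    if "S \<subseteq> {0..n}" "k \<in> S" "S \<noteq> {0..n}" for S
    using f retract_simplex_horn[OF that] unfolding smap_def by (auto simp: cells_Ex)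
  have "marked_map_on le (sdposet n) (Sd_mark n) (horn_chains n k) X W F"
    unfolding marked_map_on_def marked_map_def smap_def
  proof (intro conjI allI impI ballI)
    fix j c assume "c \<in> cells (subsset (nerve (sdposet n) le) ?H) j"
    then have c: "c \<in> ?H j" by simp
    show "F j c \<in> cells X j"
      using fS[OF hull[OF c]] H_Sd[OF c] unfolding F_def marked_map_def smap_def by blast
  next
    fix \<theta> p j c assume \<theta>: "mono_map \<theta> p j" and "c \<in> cells (subsset (nerve (sdposet n) le) ?H) j"
    then have c: "c \<in> ?H j" by simp
    define c' where "c' = act (nerve (sdposet n) le) \<theta> p j c"
    have c': "c' \<in> cells (Sd n) p" using act_nerve_cells[OF \<theta>] H_Sd[OF c] by (simp add: c'_def Sd_def)
    have "hull p c' \<subseteq> hull j c"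
      unfolding c'_def hull_def using act_nerve_image_subset[OF \<theta>, of "sdposet n" le c]
      by (intro Un_mono Union_mono) auto
    then have "F p c' = f n (retract_simplex n (hull j c)) p c'"
      unfolding F_def using hull[OF c] c_hull
      by (intro horn_retract_value[OF f _ _ _ _ c']) (auto simp: hull_def)
    also have "\<dots> = act X \<theta> p j (F j c)"
      using fS[OF hull[OF c]] \<theta> H_Sd[OF c] unfolding F_def c'_def marked_map_def smap_def Sd_def by auto
    finally show "F p (act (subsset (nerve (sdposet n) le) ?H) \<theta> p j c) = act X \<theta> p j (F j c)"
      by (simp add: c'_def)
  next
    fix e assume e: "e \<in> Sd_mark n \<inter> ?H 1"
    then show "F 1 e \<in> W" using fS[OF hull[of e 1]] unfolding F_def marked_map_def by blast
  qed
  moreover have "f m s j d = F j (sd_map s j d)" if s: "s \<in> horn n k m" and d: "d \<in> cells (Sd m) j"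
    for m s j d
  proof -
    have sc: "s \<in> cells (Delta n) m" using s by (simp add: horn_def)
    define S where "S = s ` {0..m} \<union> {k}"
    have S: "S \<subseteq> {0..n}" "k \<in> S" "S \<noteq> {0..n}"
      using s k unfolding S_def horn_def cells_Delta by auto
    have "f m s j d = f n (retract_simplex n S) j (sd_map s j d)"
      using retract_simplex_fixed[OF S(1)]
      by (intro smap_Ex_face[OF f sc retract_simplex_horn[OF S] _ d]) (simp add: S_def)
    moreover have sH: "sd_map s j d \<in> ?H j" by (rule sd_map_horn_chains[OF s d k])
    moreover have "hull j (sd_map s j d) \<subseteq> S"
    proof -
      have "sd_map s j d i \<subseteq> s ` {0..m}" if "i \<in> {0..j}" for i
        using d that unfolding cells_Sd nerve_map_def by (simp add: image_mono)
      then have "\<Union>(sd_map s j d ` {0..j}) \<subseteq> s ` {0..m}" by (rule UN_least)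
      then show ?thesis unfolding hull_def S_def by blast
    qed
    moreover have "\<And>i. i \<le> j \<Longrightarrow> sd_map s j d i \<subseteq> hull j (sd_map s j d)" by (rule c_hull)
    ultimately show ?thesis
      unfolding F_def using horn_retract_value[OF f _ S(1) hull(2)[OF sH] S(3) H_Sd[OF sH]] by simp
  qed
  ultimately show ?thesis using that by blast
qed

end

section \<open>Chains of faces and the filtration of the subdivision\<close>

definition sd_chain :: "nat \<Rightarrow> nat set set \<Rightarrow> bool" where
  "sd_chain n C \<longleftrightarrow> finite C \<and> C \<noteq> {} \<and> (\<forall>A\<in>C. A \<noteq> {} \<and> A \<subseteq> {0..n}) \<and>
     (\<forall>A\<in>C. \<forall>A'\<in>C. A \<subseteq> A' \<or> A' \<subseteq> A)"

definition missing :: "nat \<Rightarrow> nat set set \<Rightarrow> nat set set" where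
  "missing k C = {A\<in>C. k \<notin> A}"

definition pivot :: "nat \<Rightarrow> nat set set \<Rightarrow> nat set" where
  "pivot k C = \<Union>(missing k C) \<union> {k}"

definition new_chain :: "nat \<Rightarrow> nat \<Rightarrow> nat set set \<Rightarrow> bool" where
  "new_chain n k C \<longleftrightarrow> {0..n} \<in> C \<and> {0..n} - {k} \<notin> C \<and> missing k C \<noteq> {}"

definition rank_base :: "nat \<Rightarrow> nat" where
  "rank_base n = 2 ^ (n + 1) + 1"

definition chain_rank :: "nat \<Rightarrow> nat \<Rightarrow> nat set set \<Rightarrow> nat" where
  "chain_rank n k C = card (missing k C) * rank_base n + card (C - {pivot k C})"

definition stage1_chains :: "nat \<Rightarrow> nat \<Rightarrow> nat set set set" where
  "stage1_chains n k = horn_chains n k \<union> {C. C \<subseteq> Lposet n k}"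

definition stage2_chains :: "nat \<Rightarrow> nat \<Rightarrow> nat \<Rightarrow> nat set set set \<Rightarrow> nat set set set" where
  "stage2_chains n k w S =
     stage1_chains n k \<union> {C. new_chain n k C \<and> chain_rank n k C < w} \<union> {C. \<exists>\<sigma>\<in>S. C \<subseteq> \<sigma>}"

definition pivot_chains :: "nat \<Rightarrow> nat \<Rightarrow> nat \<Rightarrow> nat set set set" where
  "pivot_chains n k w =
     {\<sigma>. sd_chain n \<sigma> \<and> new_chain n k \<sigma> \<and> pivot k \<sigma> \<in> \<sigma> \<and> chain_rank n k \<sigma> = w}"

lemma sd_chain_subset: "sd_chain n C \<Longrightarrow> C' \<subseteq> C \<Longrightarrow> C' \<noteq> {} \<Longrightarrow> sd_chain n C'"
  unfolding sd_chain_def by (meson finite_subset subsetD)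

lemma Union_in_sd_chain: "sd_chain n C \<Longrightarrow> \<Union>C \<in> C"
  unfolding sd_chain_def by (intro Union_in_chain[of C UNIV]) (auto simp: subset_chain_def)

lemma Union_sd_chain_subset: "sd_chain n C \<Longrightarrow> \<Union>C \<subseteq> {0..n}"
  unfolding sd_chain_def by auto

lemma card_sd_chain_less:
  assumes "sd_chain n C"
  shows "card C < rank_base n"
proof -
  have "C \<subseteq> Pow {0..n}" using assms unfolding sd_chain_def by auto
  then have "card C \<le> card (Pow {0..n})" by (intro card_mono) auto
  then show ?thesis by (simp add: card_Pow rank_base_def)
qed

lemma card_sd_chain_minus_less: "sd_chain n C \<Longrightarrow> card (C - {A}) < rank_base n"
  using card_sd_chain_less[of n C] card_Diff1_le[of C A] sd_chain_def by fastforce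

lemma finite_pivot_chains: "finite (pivot_chains n k w)"
proof -
  have "pivot_chains n k w \<subseteq> Pow (Pow {0..n})" by (auto simp: pivot_chains_def sd_chain_def)
  then show ?thesis by (rule finite_subset) simp
qed

lemma horn_chain_avoids_facet:
  assumes "sd_chain n C" "\<Union>C \<union> {k} \<noteq> {0..n}" "k \<le> n"
  shows "{0..n} - {k} \<notin> C"
proof
  assume "{0..n} - {k} \<in> C"
  then have "\<Union>C \<union> {k} = {0..n}" using Union_sd_chain_subset[OF assms(1)] assms(3) by auto
  then show False using assms(2) by simp
qed

lemma new_chain_if_not_stage1:
  assumes C: "sd_chain n C" "C \<notin> stage1_chains n k" "{0..n} - {k} \<notin> C"
  shows "new_chain n k C"
proof -
  have U: "\<Union>C \<union> {k} = {0..n}" and notL: "\<not> C \<subseteq> Lposet n k"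
    using C(2) by (auto simp: stage1_chains_def horn_chains_def)
  have "\<Union>C = {0..n} \<or> \<Union>C = {0..n} - {k}" using U Union_sd_chain_subset[OF C(1)] by blast
  then have "{0..n} \<in> C" using Union_in_sd_chain[OF C(1)] C(3) by auto
  moreover have "missing k C \<noteq> {}"
    using notL C(1) unfolding sd_chain_def Lposet_def missing_def by auto
  ultimately show ?thesis using C(3) by (simp add: new_chain_def)
qed

lemma pivot_properties:
  assumes C: "sd_chain n C" "missing k C \<noteq> {}" "k \<le> n" "{0..n} - {k} \<notin> C"
  shows "pivot k C \<noteq> {0..n}" "pivot k C \<notin> missing k C" "k \<in> pivot k C"
    "pivot k C \<subseteq> {0..n}" "\<And>A. A \<in> missing k C \<Longrightarrow> A \<subset> pivot k C"
    "\<And>A. A \<in> C \<Longrightarrow> k \<in> A \<Longrightarrow> pivot k C \<subseteq> A"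
    "\<And>A. A \<in> C \<Longrightarrow> A \<subseteq> pivot k C \<or> pivot k C \<subseteq> A"
proof -
  have "sd_chain n (missing k C)" using sd_chain_subset[OF C(1) _ C(2)] by (auto simp: missing_def)
  then have top: "\<Union>(missing k C) \<in> C" "k \<notin> \<Union>(missing k C)"
    using Union_in_sd_chain by (auto simp: missing_def)
  show "pivot k C \<noteq> {0..n}"
  proof
    assume "pivot k C = {0..n}"
    then have "\<Union>(missing k C) = {0..n} - {k}" using top(2) unfolding pivot_def by blast
    then show False using top(1) C(4) by simp
  qed
  show "pivot k C \<notin> missing k C" "k \<in> pivot k C" by (auto simp: pivot_def missing_def)
  show "pivot k C \<subseteq> {0..n}"
    using top(1) C(1,3) unfolding sd_chain_def pivot_def by auto
  show "A \<subset> pivot k C" if "A \<in> missing k C" for A using that by (auto simp: pivot_def missing_def)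
  show below: "pivot k C \<subseteq> A" if "A \<in> C" "k \<in> A" for A
  proof -
    have "A \<subseteq> \<Union>(missing k C) \<or> \<Union>(missing k C) \<subseteq> A" using top(1) that(1) C(1) unfolding sd_chain_def by blast
    then show ?thesis using that(2) top(2) by (auto simp: pivot_def)
  qed
  show "A \<subseteq> pivot k C \<or> pivot k C \<subseteq> A" if "A \<in> C" for A
    using below[OF that] that by (auto simp: pivot_def missing_def)
qed

lemma chain_rank_mono:
  assumes "sd_chain n C" "C' \<subseteq> C" "C' \<noteq> {}"
  shows "chain_rank n k C' \<le> chain_rank n k C"
    and "missing k C' \<noteq> missing k C \<Longrightarrow> chain_rank n k C' < chain_rank n k C"
    and "missing k C' = missing k C \<Longrightarrow> C' - {pivot k C} \<noteq> C - {pivot k C} \<Longrightarrow>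
           chain_rank n k C' < chain_rank n k C"
proof -
  have fin: "finite C" using assms(1) by (simp add: sd_chain_def)
  have sub: "missing k C' \<subseteq> missing k C" using assms(2) by (auto simp: missing_def)
  have small: "card (C' - {pivot k C'}) < rank_base n"
    using card_sd_chain_minus_less[OF sd_chain_subset[OF assms]] .
  show less: "chain_rank n k C' < chain_rank n k C" if "missing k C' \<noteq> missing k C"
  proof -
    have "card (missing k C') < card (missing k C)"
      using sub that fin by (intro psubset_card_mono) (auto simp: missing_def)
    then have "(card (missing k C') + 1) * rank_base n \<le> card (missing k C) * rank_base n"
      by (intro mult_right_mono) simp_all
    then show ?thesis using small unfolding chain_rank_def by (simp add: algebra_simps)
  qed
  have same: "chain_rank n k C' \<le> chain_rank n k C"
    "C' - {pivot k C} \<noteq> C - {pivot k C} \<Longrightarrow> chain_rank n k C' < chain_rank n k C"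
    if "missing k C' = missing k C"
  proof -
    have b: "pivot k C' = pivot k C" using that by (simp add: pivot_def)
    have s: "C' - {pivot k C} \<subseteq> C - {pivot k C}" using assms(2) by auto
    show "chain_rank n k C' \<le> chain_rank n k C"
      unfolding chain_rank_def b that using card_mono[OF _ s] fin by simp
    assume "C' - {pivot k C} \<noteq> C - {pivot k C}"
    then have "card (C' - {pivot k C}) < card (C - {pivot k C})"
      using s fin by (intro psubset_card_mono) auto
    then show "chain_rank n k C' < chain_rank n k C" unfolding chain_rank_def b that by simp
  qed
  show "chain_rank n k C' \<le> chain_rank n k C" using less same by (cases "missing k C' = missing k C") auto
  show "missing k C' = missing k C \<Longrightarrow> C' - {pivot k C} \<noteq> C - {pivot k C} \<Longrightarrow>
      chain_rank n k C' < chain_rank n k C" using same by blast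
qed

lemma stage2_chains_0: "stage2_chains n k 0 {} = stage1_chains n k"
  by (auto simp: stage2_chains_def)

lemma horn_chains_subset_stage2: "horn_chains n k \<subseteq> stage2_chains n k w S"
  by (auto simp: stage2_chains_def stage1_chains_def)

lemma stage2_chain_avoids_facet:
  assumes "sd_chain n C" "C \<in> stage2_chains n k w S" "S \<subseteq> pivot_chains n k w'" "k \<le> n"
  shows "{0..n} - {k} \<notin> C"
proof -
  consider "\<Union>C \<union> {k} \<noteq> {0..n}" | "C \<subseteq> Lposet n k" | "new_chain n k C" | \<sigma> where "\<sigma> \<in> S" "C \<subseteq> \<sigma>"
    using assms(2) unfolding stage2_chains_def stage1_chains_def horn_chains_def by blast
  then show ?thesis
  proof cases
    case 1
    then show ?thesis using horn_chain_avoids_facet assms(1,4) by blast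
  next
    case 2
    then show ?thesis by (auto simp: Lposet_def)
  next
    case 3
    then show ?thesis by (simp add: new_chain_def)
  next
    case 4
    then show ?thesis using assms(3) by (auto simp: pivot_chains_def new_chain_def)
  qed
qed

lemma stage2_chains_subset_closed:
  assumes C: "sd_chain n C" "C \<in> stage2_chains n k w S" and C': "C' \<subseteq> C" "C' \<noteq> {}"
    and S: "S \<subseteq> pivot_chains n k w'" and k: "k \<le> n"
  shows "C' \<in> stage2_chains n k w S"
proof (cases "C' \<in> stage1_chains n k")
  case False
  have C'_chain: "sd_chain n C'" using sd_chain_subset C C' by blast
  have nf: "{0..n} - {k} \<notin> C'" using stage2_chain_avoids_facet[OF C S k] C' by blast
  have "C \<notin> stage1_chains n k"
  proof
    assume "C \<in> stage1_chains n k"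
    then consider "\<Union>C \<union> {k} \<noteq> {0..n}" | "C \<subseteq> Lposet n k"
      by (auto simp: stage1_chains_def horn_chains_def)
    then show False
    proof cases
      case 1
      have "\<Union>C' \<union> {k} \<subseteq> \<Union>C \<union> {k}" "\<Union>C \<union> {k} \<subseteq> {0..n}"
        using C' Union_sd_chain_subset[OF C(1)] k by auto
      moreover have "\<Union>C' \<union> {k} = {0..n}" using False by (auto simp: stage1_chains_def horn_chains_def)
      ultimately show False using 1 by blast
    next
      case 2
      then show False using False C' by (auto simp: stage1_chains_def)
    qed
  qed
  then consider "new_chain n k C" "chain_rank n k C < w" | "\<exists>\<sigma>\<in>S. C \<subseteq> \<sigma>"
    using C(2) by (auto simp: stage2_chains_def)
  then show ?thesis
  proof cases
    case 1
    then show ?thesis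
      using new_chain_if_not_stage1[OF C'_chain False nf] chain_rank_mono(1)[OF C(1) C', of k]
      by (simp add: stage2_chains_def)
  next
    case 2
    then obtain \<sigma> where "\<sigma> \<in> S" "C \<subseteq> \<sigma>" by blast
    then show ?thesis using C' unfolding stage2_chains_def by blast
  qed
qed (simp add: stage2_chains_def)

lemma pivot_chains_unique:
  assumes \<sigma>: "\<sigma> \<in> pivot_chains n k w" and \<sigma>': "\<sigma>' \<in> pivot_chains n k w"
    and sub: "\<sigma> - {pivot k \<sigma>} \<subseteq> \<sigma>'"
  shows "\<sigma> = \<sigma>'"
proof -
  have ch: "sd_chain n \<sigma>" "sd_chain n \<sigma>'" and rk: "chain_rank n k \<sigma> = w" "chain_rank n k \<sigma>' = w"
    and piv: "pivot k \<sigma> \<in> \<sigma>" "pivot k \<sigma>' \<in> \<sigma>'"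
    using \<sigma> \<sigma>' by (auto simp: pivot_chains_def new_chain_def)
  have u1: "missing k \<sigma> \<subseteq> missing k \<sigma>'" using sub by (auto simp: missing_def pivot_def)
  have u2: "missing k \<sigma>' = missing k \<sigma>"
  proof (rule ccontr)
    assume "missing k \<sigma>' \<noteq> missing k \<sigma>"
    then have "card (missing k \<sigma>) < card (missing k \<sigma>')"
      using u1 ch(2) by (intro psubset_card_mono) (auto simp: sd_chain_def missing_def)
    then have "(card (missing k \<sigma>) + 1) * rank_base n \<le> card (missing k \<sigma>') * rank_base n"
      by (intro mult_right_mono) auto
    moreover have "card (\<sigma> - {pivot k \<sigma>}) < rank_base n" by (rule card_sd_chain_minus_less[OF ch(1)])
    ultimately have "chain_rank n k \<sigma> < chain_rank n k \<sigma>'" by (simp add: chain_rank_def algebra_simps)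
    then show False using rk by simp
  qed
  then have b: "pivot k \<sigma>' = pivot k \<sigma>" by (simp add: pivot_def)
  have ss: "\<sigma> \<subseteq> \<sigma>'"
  proof
    fix A assume "A \<in> \<sigma>"
    then show "A \<in> \<sigma>'" using sub piv(2) b by (cases "A = pivot k \<sigma>") auto
  qed
  have "card (\<sigma>' - {pivot k \<sigma>}) = card (\<sigma> - {pivot k \<sigma>})" using rk unfolding chain_rank_def u2 b by simp
  then have "\<sigma> - {pivot k \<sigma>} = \<sigma>' - {pivot k \<sigma>}"
    using ss ch(2) by (intro card_subset_eq) (auto simp: sd_chain_def)
  then show ?thesis using piv b by (metis insert_Diff)
qed

lemma pivot_chain_faces:
  assumes \<sigma>: "\<sigma> \<in> pivot_chains n k w" "\<sigma> \<notin> S" and S: "S \<subseteq> pivot_chains n k w"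
    and J: "J \<subseteq> \<sigma>" "J \<noteq> {}" and k: "k \<le> n"
  shows "J \<in> stage2_chains n k w S \<longleftrightarrow> \<not> \<sigma> - {pivot k \<sigma>} \<subseteq> J"
proof
  have ch: "sd_chain n \<sigma>" and nc: "new_chain n k \<sigma>" and rk: "chain_rank n k \<sigma> = w"
    using \<sigma> by (auto simp: pivot_chains_def)
  have chJ: "sd_chain n J" using sd_chain_subset ch J by blast
  have nf: "{0..n} - {k} \<notin> \<sigma>" and top: "{0..n} \<in> \<sigma>" and us: "missing k \<sigma> \<noteq> {}"
    using nc by (auto simp: new_chain_def)
  note pv = pivot_properties[OF ch us k nf]
  show "\<not> \<sigma> - {pivot k \<sigma>} \<subseteq> J" if JD: "J \<in> stage2_chains n k w S"
  proof
    assume sub: "\<sigma> - {pivot k \<sigma>} \<subseteq> J"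
    have uJ: "missing k J = missing k \<sigma>" using sub J pv(2) by (auto simp: missing_def)
    have "{0..n} \<in> J" using sub top pv(1) by auto
    then have "\<Union>J \<union> {k} = {0..n}" using Union_sd_chain_subset[OF chJ] k by auto
    moreover have "\<not> J \<subseteq> Lposet n k" using uJ us by (auto simp: missing_def Lposet_def)
    moreover have "chain_rank n k J = w"
    proof -
      have "J - {pivot k \<sigma>} = \<sigma> - {pivot k \<sigma>}" using sub J by blast
      moreover have "pivot k J = pivot k \<sigma>" using uJ by (simp add: pivot_def)
      ultimately show ?thesis using rk uJ by (simp add: chain_rank_def)
    qed
    ultimately obtain \<sigma>' where "\<sigma>' \<in> S" "J \<subseteq> \<sigma>'"
      using JD by (auto simp: stage2_chains_def stage1_chains_def horn_chains_def)
    then show False using pivot_chains_unique[OF \<sigma>(1) _ ] S sub \<sigma>(2) by blast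
  qed
  show "J \<in> stage2_chains n k w S" if nsub: "\<not> \<sigma> - {pivot k \<sigma>} \<subseteq> J"
  proof (cases "J \<in> stage1_chains n k")
    case False
    have "new_chain n k J" using new_chain_if_not_stage1[OF chJ False] nf J by blast
    moreover have "chain_rank n k J < w"
      using chain_rank_mono(2,3)[OF ch J, of k] nsub rk by (cases "missing k J = missing k \<sigma>") auto
    ultimately show ?thesis by (simp add: stage2_chains_def)
  qed (simp add: stage2_chains_def)
qed

lemma stage2_chains_Suc:
  assumes C: "sd_chain n C" "C \<in> stage2_chains n k (Suc w) {}" and k: "k \<le> n"
  shows "C \<in> stage2_chains n k w (pivot_chains n k w)"
proof -
  consider "C \<in> stage1_chains n k" | "new_chain n k C" "chain_rank n k C < w"
    | "new_chain n k C" "chain_rank n k C = w"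
    using C(2) unfolding stage2_chains_def by force
  then show ?thesis
  proof cases
    case 3
    have nf: "{0..n} - {k} \<notin> C" and us: "missing k C \<noteq> {}" using 3 by (auto simp: new_chain_def)
    note pv = pivot_properties[OF C(1) us k nf]
    define \<sigma> where "\<sigma> = insert (pivot k C) C"
    have ch: "sd_chain n \<sigma>"
    proof -
      have "\<forall>A\<in>\<sigma>. \<forall>A'\<in>\<sigma>. A \<subseteq> A' \<or> A' \<subseteq> A" using C(1) pv(7) unfolding sd_chain_def \<sigma>_def by blast
      moreover have "pivot k C \<noteq> {}" "pivot k C \<subseteq> {0..n}" using pv(3,4) by auto
      ultimately show ?thesis using C(1) unfolding sd_chain_def \<sigma>_def by auto
    qed
    have um: "missing k \<sigma> = missing k C" using pv(3) by (auto simp: \<sigma>_def missing_def)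
    then have pb: "pivot k \<sigma> = pivot k C" by (simp add: pivot_def)
    have "new_chain n k \<sigma>" using 3 um pv(3) unfolding new_chain_def \<sigma>_def by auto
    moreover have "chain_rank n k \<sigma> = w"
      using 3(2) unfolding chain_rank_def um pb by (simp add: \<sigma>_def)
    ultimately have "\<sigma> \<in> pivot_chains n k w" using ch pb by (simp add: pivot_chains_def \<sigma>_def)
    then show ?thesis unfolding stage2_chains_def \<sigma>_def by blast
  qed (simp_all add: stage2_chains_def)
qed

lemma stage2_chains_final:
  assumes C: "sd_chain n C" "{0..n} - {k} \<notin> C" and k: "k \<le> n"
  shows "C \<in> stage2_chains n k (rank_base n * rank_base n) {}"
proof (cases "C \<in> stage1_chains n k")
  case False
  have "card (missing k C) \<le> card C"
    using C(1) by (intro card_mono) (auto simp: missing_def sd_chain_def)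
  then have "card (missing k C) < rank_base n" using card_sd_chain_less[OF C(1)] by linarith
  then have "(card (missing k C) + 1) * rank_base n \<le> rank_base n * rank_base n"
    by (intro mult_right_mono) auto
  moreover have "card (C - {pivot k C}) < rank_base n" by (rule card_sd_chain_minus_less[OF C(1)])
  ultimately have "chain_rank n k C < rank_base n * rank_base n" by (simp add: chain_rank_def algebra_simps)
  then show ?thesis using new_chain_if_not_stage1[OF C(1) False C(2)] by (simp add: stage2_chains_def)
qed (simp add: stage2_chains_def)

section \<open>Extending a horn of Ex over the whole subdivision\<close>

lemma finite_chain_enumeration:
  fixes R :: "'a \<Rightarrow> 'a \<Rightarrow> bool"
  assumes fin: "finite \<sigma>" and ne: "\<sigma> \<noteq> {}"
    and refl: "\<And>x. x \<in> \<sigma> \<Longrightarrow> R x x"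
    and antisym: "\<And>x y. x \<in> \<sigma> \<Longrightarrow> y \<in> \<sigma> \<Longrightarrow> R x y \<Longrightarrow> R y x \<Longrightarrow> x = y"
    and trans: "\<And>x y z. x \<in> \<sigma> \<Longrightarrow> y \<in> \<sigma> \<Longrightarrow> z \<in> \<sigma> \<Longrightarrow> R x y \<Longrightarrow> R y z \<Longrightarrow> R x z"
    and total: "\<And>x y. x \<in> \<sigma> \<Longrightarrow> y \<in> \<sigma> \<Longrightarrow> R x y \<or> R y x"
  obtains e where "bij_betw e {0..card \<sigma> - 1} \<sigma>"
    and "\<And>i j. i \<le> card \<sigma> - 1 \<Longrightarrow> j \<le> card \<sigma> - 1 \<Longrightarrow> R (e i) (e j) \<longleftrightarrow> i \<le> j"
proof -
  define rk where "rk x = card {y\<in>\<sigma>. R y x \<and> y \<noteq> x}" for x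
  have rk_le: "R x y \<longleftrightarrow> rk x \<le> rk y" if xy: "x \<in> \<sigma>" "y \<in> \<sigma>" for x y
  proof
    assume "R x y"
    then have "{z\<in>\<sigma>. R z x \<and> z \<noteq> x} \<subseteq> {z\<in>\<sigma>. R z y \<and> z \<noteq> y}"
      using trans antisym xy by blast
    then show "rk x \<le> rk y" unfolding rk_def using fin by (intro card_mono) auto
  next
    assume le: "rk x \<le> rk y"
    show "R x y"
    proof (rule ccontr)
      assume "\<not> R x y"
      then have "R y x" "y \<noteq> x" using total refl xy by blast+
      then have "{z\<in>\<sigma>. R z y \<and> z \<noteq> y} \<subset> {z\<in>\<sigma>. R z x \<and> z \<noteq> x}"
        using trans antisym xy by blast
      then have "rk y < rk x" unfolding rk_def using fin by (intro psubset_card_mono) auto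
      then show False using le by simp
    qed
  qed
  have inj: "inj_on rk \<sigma>" by (rule inj_onI) (use rk_le antisym in \<open>metis order_refl\<close>)
  have "rk x \<le> card \<sigma> - 1" if "x \<in> \<sigma>" for x
  proof -
    have "rk x \<le> card (\<sigma> - {x})" unfolding rk_def using fin by (intro card_mono) auto
    then show ?thesis using that fin by simp
  qed
  then have "rk ` \<sigma> \<subseteq> {0..card \<sigma> - 1}" by auto
  moreover have "card (rk ` \<sigma>) = card {0..card \<sigma> - 1}"
    using card_image[OF inj] fin ne by (simp add: card_gt_0_iff)
  ultimately have bij: "bij_betw rk \<sigma> {0..card \<sigma> - 1}"
    using inj by (simp add: bij_betw_def card_subset_eq)
  show ?thesis
  proof
    show "bij_betw (inv_into \<sigma> rk) {0..card \<sigma> - 1} \<sigma>" by (rule bij_betw_inv_into[OF bij])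
    fix i j assume "i \<le> card \<sigma> - 1" "j \<le> card \<sigma> - 1"
    then show "R (inv_into \<sigma> rk i) (inv_into \<sigma> rk j) \<longleftrightarrow> i \<le> j"
      using bij rk_le bij_betw_inv_into_right[OF bij] bij_betw_apply[OF bij_betw_inv_into[OF bij]]
      by simp
  qed
qed

lemma enumeration_facet_iff:
  fixes N :: nat
  assumes e: "bij_betw e {0..N} \<sigma>" and i0: "i0 \<le> N" and I: "I \<subseteq> {0..N}"
  shows "\<sigma> - {e i0} \<subseteq> e ` I \<longleftrightarrow> insert i0 I = {0..N}"
proof -
  have inj: "inj_on e {0..N}" and im: "\<sigma> = e ` {0..N}" using e by (auto simp: bij_betw_def)
  have "e ` ({0..N} - {i0}) = e ` {0..N} - e ` {i0}"
    using i0 by (intro inj_on_image_set_diff[OF inj]) auto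
  then have "\<sigma> - {e i0} = e ` ({0..N} - {i0})" unfolding im by simp
  moreover have "e ` ({0..N} - {i0}) \<subseteq> e ` I \<longleftrightarrow> {0..N} - {i0} \<subseteq> I"
    using inj_on_image_mem_iff[OF inj _ I] by blast
  ultimately show ?thesis using I i0 by auto
qed

lemma weakly_closed_mrlp: "weakly_closed X W \<Longrightarrow> mrlp (Delta 2) (cells (Delta 2) 1) (horn 2 1) X W"
  unfolding weakly_closed_def mrlp_def marked_map_def
proof (intro allI impI)
  fix f assume wc: "\<forall>f. smap (subsset (Delta 2) (horn 2 1)) X f \<longrightarrow> (\<forall>e\<in>horn 2 1 1. f 1 e \<in> W) \<longrightarrow>
        (\<exists>g. smap (Delta 2) X g \<and> (\<forall>n. \<forall>a\<in>horn 2 1 n. g n a = f n a) \<and> (\<forall>e\<in>cells (Delta 2) 1. g 1 e \<in> W))"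
    and f: "smap (subsset (Delta 2) (horn 2 1)) X f \<and> (\<forall>e\<in>cells (Delta 2) 1 \<inter> horn 2 1 1. f 1 e \<in> W)"
  have "horn 2 1 1 \<subseteq> cells (Delta 2) 1" by (auto simp: horn_def)
  then have "\<forall>e\<in>horn 2 1 1. f 1 e \<in> W" using f by blast
  then show "\<exists>g. (smap (Delta 2) X g \<and> (\<forall>e\<in>cells (Delta 2) 1. g 1 e \<in> W)) \<and> (\<forall>n. \<forall>a\<in>horn 2 1 n. g n a = f n a)"
    using wc f by blast
qed

lemma edge_outside_inner_horn:
  assumes "s \<in> cells (Delta N) 1" "s \<notin> horn N i 1" "0 < i" "i < N"
  shows "N = 2 \<and> i = 1 \<and> s 0 = 0 \<and> s 1 = 2"
proof -
  have "{0..1::nat} = {0, 1}" by auto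
  then have cover: "{i, s 0, s 1} = {0..N}" using assms(1,2) by (auto simp: horn_def)
  have "N + 1 = card {i, s 0, s 1}" using cover by simp
  also have "\<dots> \<le> 3" by (auto simp: card_insert_if)
  finally have "N \<le> 2" by simp
  moreover have "s 0 \<le> s 1" using assms(1) by (auto simp: cells_Delta)
  moreover have "0 \<in> {i, s 0, s 1}" "N \<in> {i, s 0, s 1}" using cover by auto
  ultimately show ?thesis using assms(3,4) by auto
qed

lemma mrlp_inner_horn:
  assumes qc: "quasicategory X" and wc: "weakly_closed X W" and i: "0 < i" "i < N"
    and V: "V \<subseteq> horn N i 1 \<or> (N = 2 \<and> V = cells (Delta 2) 1)"
  shows "mrlp (Delta N) V (horn N i) X W"
  using V
proof
  assume "V \<subseteq> horn N i 1"
  then show ?thesis using qc i by (intro rlp_imp_mrlp) (auto simp: quasicategory_def)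
next
  assume "N = 2 \<and> V = cells (Delta 2) 1"
  moreover have "i = 1" using calculation i by simp
  ultimately show ?thesis using weakly_closed_mrlp[OF wc] by simp
qed

context subdivision
begin

lemma sd_chain_of_simplex:
  assumes "c \<in> cells (Sd n) m"
  shows "sd_chain n (c ` {0..m})"
proof -
  have "A \<subseteq> A' \<or> A' \<subseteq> A" if "A \<in> c ` {0..m}" "A' \<in> c ` {0..m}" for A A'
  proof -
    from that obtain i j where "i \<in> {0..m}" "j \<in> {0..m}" "A = c i" "A' = c j" by blast
    then show ?thesis using assms le_mu_cases unfolding cells_Sd by (metis atLeastAtMost_iff nle_le)
  qed
  then show ?thesis using assms unfolding sd_chain_def cells_Sd by auto
qed

lemma face_closed_horn_chains:
  assumes "k \<le> n"
  shows "face_closed le (sdposet n) (horn_chains n k)"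
  unfolding face_closed_def
proof (intro allI impI)
  fix m c C assume c: "c \<in> spanned le (sdposet n) (horn_chains n k) m" and C: "C \<subseteq> c ` {0..m}"
  have "sd_chain n (c ` {0..m})" using c sd_chain_of_simplex by (simp add: spanned_iff Sd_def)
  then have "\<Union>C \<union> {k} \<subseteq> \<Union>(c ` {0..m}) \<union> {k}" "\<Union>(c ` {0..m}) \<union> {k} \<subseteq> {0..n}"
    using C Union_sd_chain_subset assms by auto
  moreover have "\<Union>(c ` {0..m}) \<union> {k} \<noteq> {0..n}" using c by (simp add: spanned_iff horn_chains_def)
  ultimately show "C \<in> horn_chains n k" unfolding horn_chains_def by blast
qed

lemma face_closed_stage2_chains:
  assumes "S \<subseteq> pivot_chains n k w'" "k \<le> n"
  shows "face_closed le (sdposet n) (stage2_chains n k w S)"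
  unfolding face_closed_def
proof (intro allI impI)
  fix m c C assume c: "c \<in> spanned le (sdposet n) (stage2_chains n k w S) m"
    and C: "C \<subseteq> c ` {0..m}" "C \<noteq> {}"
  have "sd_chain n (c ` {0..m})" using c sd_chain_of_simplex by (simp add: spanned_iff Sd_def)
  then show "C \<in> stage2_chains n k w S"
    using stage2_chains_subset_closed c C assms by (simp add: spanned_iff)
qed


lemma enumerated_chain_marked_edges:
  fixes N :: nat
  assumes e: "bij_betw e {0..N} \<sigma>" "\<And>i j. i \<le> N \<Longrightarrow> j \<le> N \<Longrightarrow> le (e i) (e j) \<longleftrightarrow> i \<le> j"
    and \<sigma>: "sd_chain n \<sigma>" and i0: "0 < i0" "i0 < N"
    and triangle: "card \<sigma> = 3 \<Longrightarrow> \<forall>x\<in>\<sigma>. \<forall>y\<in>\<sigma>. x \<noteq> e i0 \<longrightarrow> y \<noteq> e i0 \<longrightarrow> x \<noteq> y \<longrightarrow>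
                     mu x = mu y \<longrightarrow> (\<forall>z\<in>\<sigma>. mu z = mu x)"
  defines "V \<equiv> {s \<in> cells (Delta N) 1. nerve_map e 1 s \<in> Sd_mark n}"
  shows "V \<subseteq> horn N i0 1 \<or> (N = 2 \<and> V = cells (Delta 2) 1)"
proof (cases "V \<subseteq> horn N i0 1")
  case False
  then obtain s where s: "s \<in> V" "s \<notin> horn N i0 1" by blast
  have N: "N = 2" "i0 = 1" "s 0 = 0" "s 1 = 2"
    using edge_outside_inner_horn[OF _ s(2) i0] s(1) by (auto simp: V_def)
  have inj: "inj_on e {0..N}" and im: "e ` {0..N} = \<sigma>" using e(1) by (auto simp: bij_betw_def)
  have mu02: "mu (e 0) = mu (e 2)" using s(1) N unfolding V_def Sd_mark_def nerve_map_def by auto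
  have distinct: "e 0 \<noteq> e 1" "e 2 \<noteq> e 1" "e 0 \<noteq> e 2"
    by (simp_all add: inj_on_eq_iff[OF inj] N(1))
  have "card \<sigma> = 3" using card_image[OF inj] im N(1) by auto
  moreover have "e 0 \<in> \<sigma>" "e 2 \<in> \<sigma>" "e 0 \<noteq> e i0" "e 2 \<noteq> e i0"
    using im N distinct by auto
  ultimately have all_mu: "\<forall>z\<in>\<sigma>. mu z = mu (e 0)"
    using triangle[rule_format] distinct(3) mu02 by blast
  have "t \<in> V" if t: "t \<in> cells (Delta 2) 1" for t
  proof -
    have t01: "t 0 \<le> 2" "t 1 \<le> 2" "t 0 \<le> t 1" using t unfolding cells_Delta by auto
    then have "e (t 0) \<in> \<sigma>" "e (t 1) \<in> \<sigma>" using im N(1) by auto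
    then have "nerve_map e 1 t \<in> cells (Sd n) 1"
      unfolding Sd_def using \<sigma> e(2) t01 N(1)
      by (intro nerve_map_cells[OF t[unfolded Delta_def]]) (auto simp: sd_chain_def sdposet_def le_Suc_eq)
    moreover have "mu (e (t 0)) = mu (e (t 1))" using all_mu \<open>e (t 0) \<in> \<sigma>\<close> \<open>e (t 1) \<in> \<sigma>\<close> by simp
    ultimately show ?thesis using t N(1) by (simp add: V_def Sd_mark_def nerve_map_def)
  qed
  then show ?thesis using N(1) by (auto simp: V_def)
qed simp

lemma extend_over_pivot_chain:
  assumes G: "marked_map_on le (sdposet n) (Sd_mark n) D X W G" and D: "face_closed le (sdposet n) D"
    and \<sigma>: "sd_chain n \<sigma>" "b \<in> \<sigma>"
    and faces: "\<And>J. J \<subseteq> \<sigma> \<Longrightarrow> J \<noteq> {} \<Longrightarrow> J \<in> D \<longleftrightarrow> \<not> \<sigma> - {b} \<subseteq> J"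
    and below: "\<exists>x\<in>\<sigma>. le x b \<and> x \<noteq> b" and above: "\<exists>y\<in>\<sigma>. le b y \<and> y \<noteq> b"
    and triangle: "card \<sigma> = 3 \<Longrightarrow> \<forall>x\<in>\<sigma>. \<forall>y\<in>\<sigma>. x \<noteq> b \<longrightarrow> y \<noteq> b \<longrightarrow> x \<noteq> y \<longrightarrow>
                     mu x = mu y \<longrightarrow> (\<forall>z\<in>\<sigma>. mu z = mu x)"
    and qc: "quasicategory X" and wc: "weakly_closed X W"
  shows "\<exists>G'. marked_map_on le (sdposet n) (Sd_mark n) (D \<union> {C. C \<subseteq> \<sigma>}) X W G' \<and>
              (\<forall>m. \<forall>c\<in>spanned le (sdposet n) D m. G' m c = G m c)"
proof -
  have total: "le x y \<or> le y x" if "x \<in> \<sigma>" "y \<in> \<sigma>" for x y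
  proof -
    have "x \<subseteq> y \<or> y \<subseteq> x" using \<sigma>(1) that unfolding sd_chain_def by blast
    then show ?thesis using le_mu_cases by auto
  qed
  define N where "N = card \<sigma> - 1"
  obtain e where e: "bij_betw e {0..N} \<sigma>" and ord: "\<And>i j. i \<le> N \<Longrightarrow> j \<le> N \<Longrightarrow> le (e i) (e j) \<longleftrightarrow> i \<le> j"
    unfolding N_def
    by (rule finite_chain_enumeration[of \<sigma> le, OF _ _ _ _ _ total])
      (use \<sigma>(1) le_mu_cases in \<open>auto simp: sd_chain_def\<close>)
  have im: "e ` {0..N} = \<sigma>" using e by (simp add: bij_betw_def)
  obtain i0 where i0: "i0 \<le> N" "e i0 = b" using \<sigma>(2) im by force
  have "0 < i0" and "i0 < N"
  proof -
    obtain j j' where "j \<le> N" "le (e j) b" "e j \<noteq> b" "j' \<le> N" "le b (e j')" "e j' \<noteq> b"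
      using below above im by force
    then have "j \<le> i0" "i0 \<le> j'" "j \<noteq> i0" "j' \<noteq> i0" using ord[of j i0] ord[of i0 j'] i0 by auto
    then show "0 < i0" "i0 < N" using \<open>j' \<le> N\<close> by simp_all
  qed
  define V where "V = {s \<in> cells (Delta N) 1. nerve_map e 1 s \<in> Sd_mark n}"
  have "V \<subseteq> horn N i0 1 \<or> (N = 2 \<and> V = cells (Delta 2) 1)"
    unfolding V_def using enumerated_chain_marked_edges[OF e ord \<sigma>(1) \<open>0 < i0\<close> \<open>i0 < N\<close>]
    unfolding i0(2) using triangle by blast
  then have lift: "mrlp (nerve {0..N} (\<le>)) V (horn N i0) X W"
    unfolding Delta_def[symmetric] by (rule mrlp_inner_horn[OF qc wc \<open>0 < i0\<close> \<open>i0 < N\<close>])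
  have pattern: "e ` s ` {0..m} \<in> D \<longleftrightarrow> s \<in> horn N i0 m" if s: "s \<in> cells (nerve {0..N} (\<le>)) m" for m s
  proof -
    have I: "s ` {0..m} \<subseteq> {0..N}" using s by (auto simp: cells_nerve)
    then have "e ` s ` {0..m} \<subseteq> \<sigma>" using im by auto
    then have "e ` s ` {0..m} \<in> D \<longleftrightarrow> insert i0 (s ` {0..m}) \<noteq> {0..N}"
      using faces enumeration_facet_iff[OF e i0(1) I] i0(2) by simp
    then show ?thesis using s by (simp add: horn_def Delta_def)
  qed
  have "\<exists>G'. marked_map_on le (sdposet n) (Sd_mark n) (D \<union> {C. C \<subseteq> e ` {0..N}}) X W G' \<and>
              (\<forall>m. \<forall>c\<in>spanned le (sdposet n) D m. G' m c = G m c)"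
  proof (rule marked_map_on_extend[OF _ _ G D pattern _ _ lift])
    show "e a \<in> sdposet n" if "a \<in> {0..N}" for a using that im \<sigma>(1) by (auto simp: sd_chain_def sdposet_def)
    show "le (e a) (e a') \<longleftrightarrow> a \<le> a'" if "a \<in> {0..N}" "a' \<in> {0..N}" for a a' using that ord by simp
    show "horn N i0 m \<subseteq> cells (nerve {0..N} (\<le>)) m" for m by (auto simp: horn_def Delta_def)
    show "s \<in> V \<longleftrightarrow> nerve_map e 1 s \<in> Sd_mark n" if "s \<in> cells (nerve {0..N} (\<le>)) 1" for s
      using that by (simp add: V_def Delta_def)
  qed
  then show ?thesis using im by simp
qed


lemma mu_insert_extreme:
  assumes "finite A" "A \<noteq> {}" "k \<le> n" "mu A = mu {0..n}"
  shows "mu (A \<union> {k}) = mu {0..n}"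
proof -
  have ends: "Max {0..n} = n" "Min {0..n} = 0" by (auto intro: Max_eqI Min_eqI)
  from le_mu_cases consider "mu = Max" | "mu = Min" by blast
  then show ?thesis
  proof cases
    case 1
    then show ?thesis using assms(3,4) ends Max_insert[OF assms(1,2), of k] by simp
  next
    case 2
    then show ?thesis using assms(4) ends Min_insert[OF assms(1,2), of k] by simp
  qed
qed

lemma pivot_chain_between:
  assumes \<sigma>: "\<sigma> \<in> pivot_chains n k w" and k: "k \<le> n"
  shows "\<exists>x\<in>\<sigma>. le x (pivot k \<sigma>) \<and> x \<noteq> pivot k \<sigma>" "\<exists>y\<in>\<sigma>. le (pivot k \<sigma>) y \<and> y \<noteq> pivot k \<sigma>"
proof -
  have ch: "sd_chain n \<sigma>" and top: "{0..n} \<in> \<sigma>" and nf: "{0..n} - {k} \<notin> \<sigma>" and us: "missing k \<sigma> \<noteq> {}"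
    using \<sigma> by (auto simp: pivot_chains_def new_chain_def)
  note pv = pivot_properties[OF ch us k nf]
  obtain a where a: "a \<in> missing k \<sigma>" using us by blast
  then have "a \<in> \<sigma>" "a \<subset> pivot k \<sigma>" using pv(5) by (auto simp: missing_def)
  moreover have "pivot k \<sigma> \<subset> {0..n}" using pv(1,4) by auto
  ultimately show "\<exists>x\<in>\<sigma>. le x (pivot k \<sigma>) \<and> x \<noteq> pivot k \<sigma>" "\<exists>y\<in>\<sigma>. le (pivot k \<sigma>) y \<and> y \<noteq> pivot k \<sigma>"
    using top le_mu_cases by auto
qed

lemma pivot_chain_triangle:
  assumes \<sigma>: "\<sigma> \<in> pivot_chains n k w" and k: "k \<le> n" and three: "card \<sigma> = 3"
  shows "\<forall>x\<in>\<sigma>. \<forall>y\<in>\<sigma>. x \<noteq> pivot k \<sigma> \<longrightarrow> y \<noteq> pivot k \<sigma> \<longrightarrow> x \<noteq> y \<longrightarrow>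
           mu x = mu y \<longrightarrow> (\<forall>z\<in>\<sigma>. mu z = mu x)"
proof -
  have ch: "sd_chain n \<sigma>" and top: "{0..n} \<in> \<sigma>" and nf: "{0..n} - {k} \<notin> \<sigma>"
    and us: "missing k \<sigma> \<noteq> {}" and piv: "pivot k \<sigma> \<in> \<sigma>"
    using \<sigma> by (auto simp: pivot_chains_def new_chain_def)
  note pv = pivot_properties[OF ch us k nf]
  obtain a where a: "a \<in> missing k \<sigma>" using us by blast
  have aS: "a \<in> \<sigma>" "a \<noteq> pivot k \<sigma>" "a \<noteq> {0..n}" using a pv(5) k by (auto simp: missing_def)
  have "card {a, pivot k \<sigma>, {0..n}} = 3" using aS pv(1) by simp
  moreover have sub: "{a, pivot k \<sigma>, {0..n}} \<subseteq> \<sigma>" using aS(1) piv top by auto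
  moreover have "finite \<sigma>" using ch by (simp add: sd_chain_def)
  ultimately have \<sigma>3: "{a, pivot k \<sigma>, {0..n}} = \<sigma>" using card_subset_eq[of \<sigma>] three by metis
  then have "missing k \<sigma> = {a}" using a pv(2) k by (auto simp: missing_def)
  then have "pivot k \<sigma> = a \<union> {k}" by (simp add: pivot_def)
  moreover have "finite a" "a \<noteq> {}" using aS(1) ch finite_subset by (auto simp: sd_chain_def)
  ultimately have mu_piv: "mu (pivot k \<sigma>) = mu {0..n}" if "mu a = mu {0..n}"
    using mu_insert_extreme k that by simp
  show ?thesis
  proof (intro ballI impI)
    fix x y z assume x: "x \<in> \<sigma>" "x \<noteq> pivot k \<sigma>" and y: "y \<in> \<sigma>" "y \<noteq> pivot k \<sigma>"
      and xy: "x \<noteq> y" "mu x = mu y" and z: "z \<in> \<sigma>"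
    have "x \<in> {a, {0..n}}" "y \<in> {a, {0..n}}" using x y \<sigma>3 by auto
    then have "mu a = mu {0..n}" "mu x = mu {0..n}" using xy by auto
    then show "mu z = mu x" using mu_piv z \<sigma>3 by auto
  qed
qed

definition Lnerve :: "nat \<Rightarrow> nat \<Rightarrow> (nat \<Rightarrow> nat set) sset" where
  "Lnerve n k = nerve (Lposet n k) le"

definition Lnerve_mark :: "nat \<Rightarrow> nat \<Rightarrow> (nat \<Rightarrow> nat set) set" where
  "Lnerve_mark n k = {s \<in> cells (Lnerve n k) 1. mu (s 0) = mu (s 1)}"

definition LJnerve :: "nat \<Rightarrow> nat \<Rightarrow> nat \<Rightarrow> (nat \<Rightarrow> nat set) set" where
  "LJnerve n k m = {s \<in> cells (Lnerve n k) m. \<forall>i\<le>m. s i \<noteq> {0..n}}"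

lemma Lnerve_cells_Sd:
  assumes "s \<in> cells (Lnerve n k) m"
  shows "s \<in> cells (Sd n) m"
proof -
  have "Lposet n k \<subseteq> sdposet n" by (auto simp: Lposet_def sdposet_def)
  then show ?thesis using assms unfolding Lnerve_def Sd_def cells_nerve by blast
qed

lemma Union_Lnerve_simplex:
  assumes "s \<in> cells (Lnerve n k) m"
  obtains i where "i \<le> m" "\<Union>(s ` {0..m}) \<union> {k} = s i"
proof -
  obtain i where i: "i \<in> {0..m}" "\<Union>(s ` {0..m}) = s i"
    using Union_in_sd_chain[OF sd_chain_of_simplex[OF Lnerve_cells_Sd[OF assms]]] by auto
  moreover have "k \<in> s i" using assms i(1) by (simp add: Lnerve_def cells_nerve Lposet_def)
  ultimately show ?thesis using that by auto
qed

lemma extend_to_stage1: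
  assumes F: "marked_map_on le (sdposet n) (Sd_mark n) (horn_chains n k) X W F" and k: "k \<le> n"
    and lift: "mrlp (Lnerve n k) (Lnerve_mark n k) (LJnerve n k) X W"
  shows "\<exists>G. marked_map_on le (sdposet n) (Sd_mark n) (stage1_chains n k) X W G \<and>
             (\<forall>m. \<forall>c\<in>spanned le (sdposet n) (horn_chains n k) m. G m c = F m c)"
proof -
  have pattern: "id ` s ` {0..m} \<in> horn_chains n k \<longleftrightarrow> s \<in> LJnerve n k m"
    if s: "s \<in> cells (nerve (Lposet n k) le) m" for m s
  proof -
    have sL: "s \<in> cells (Lnerve n k) m" using s by (simp add: Lnerve_def)
    obtain i where i: "i \<le> m" "\<Union>(s ` {0..m}) \<union> {k} = s i" by (rule Union_Lnerve_simplex[OF sL])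
    have "s j \<subseteq> s i" if "j \<le> m" for j using i(2) that by auto
    moreover have "s i \<subseteq> {0..n}" using sL i(1) by (simp add: Lnerve_def cells_nerve Lposet_def)
    ultimately have "s i \<noteq> {0..n} \<longleftrightarrow> (\<forall>j\<le>m. s j \<noteq> {0..n})" using i(1) by fastforce
    then show ?thesis using sL i(2) by (simp add: horn_chains_def LJnerve_def)
  qed
  have marks: "s \<in> Lnerve_mark n k \<longleftrightarrow> nerve_map id 1 s \<in> Sd_mark n"
    if s: "s \<in> cells (nerve (Lposet n k) le) 1" for s
    using s Lnerve_cells_Sd[of s n k 1] by (simp add: Lnerve_mark_def Sd_mark_def Lnerve_def)
  have "\<exists>G. marked_map_on le (sdposet n) (Sd_mark n) (horn_chains n k \<union> {C. C \<subseteq> id ` Lposet n k}) X W G \<and>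
      (\<forall>m. \<forall>c\<in>spanned le (sdposet n) (horn_chains n k) m. G m c = F m c)"
  proof (rule marked_map_on_extend[OF _ _ F face_closed_horn_chains[OF k] pattern _ marks])
    show "LJnerve n k m \<subseteq> cells (nerve (Lposet n k) le) m" for m by (auto simp: LJnerve_def Lnerve_def)
    show "mrlp (nerve (Lposet n k) le) (Lnerve_mark n k) (LJnerve n k) X W" using lift by (simp add: Lnerve_def)
  qed (auto simp: Lposet_def sdposet_def)
  then show ?thesis by (simp add: stage1_chains_def)
qed

lemma extend_to_next_rank:
  assumes G: "marked_map_on le (sdposet n) (Sd_mark n) (stage2_chains n k w {}) X W G"
    and k: "k \<le> n" and qc: "quasicategory X" and wc: "weakly_closed X W"
  shows "\<exists>G'. marked_map_on le (sdposet n) (Sd_mark n) (stage2_chains n k (Suc w) {}) X W G' \<and>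
              (\<forall>m. \<forall>c\<in>spanned le (sdposet n) (horn_chains n k) m. G' m c = G m c)"
proof -
  let ?H = "spanned le (sdposet n) (horn_chains n k)"
  have ind: "S \<subseteq> pivot_chains n k w \<longrightarrow> (\<exists>G'. marked_map_on le (sdposet n) (Sd_mark n) (stage2_chains n k w S) X W G' \<and>
      (\<forall>m. \<forall>c\<in>?H m. G' m c = G m c))" if "finite S" for S
    using that
  proof (induction S rule: finite_induct)
    case (insert \<sigma> S)
    show ?case
    proof
      assume S: "insert \<sigma> S \<subseteq> pivot_chains n k w"
      then obtain G' where G': "marked_map_on le (sdposet n) (Sd_mark n) (stage2_chains n k w S) X W G'"
        and agree: "\<forall>m. \<forall>c\<in>?H m. G' m c = G m c"
        using insert.IH by blast
      have \<sigma>: "\<sigma> \<in> pivot_chains n k w" and S': "S \<subseteq> pivot_chains n k w" using S by auto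
      then have ch: "sd_chain n \<sigma>" and piv: "pivot k \<sigma> \<in> \<sigma>" by (auto simp: pivot_chains_def)
      have faces: "J \<in> stage2_chains n k w S \<longleftrightarrow> \<not> \<sigma> - {pivot k \<sigma>} \<subseteq> J" if "J \<subseteq> \<sigma>" "J \<noteq> {}" for J
        using pivot_chain_faces[OF \<sigma> insert.hyps(2) S' that k] .
      obtain G'' where G'': "marked_map_on le (sdposet n) (Sd_mark n) (stage2_chains n k w S \<union> {C. C \<subseteq> \<sigma>}) X W G''"
        and agree': "\<forall>m. \<forall>c\<in>spanned le (sdposet n) (stage2_chains n k w S) m. G'' m c = G' m c"
        using extend_over_pivot_chain[OF G' face_closed_stage2_chains[OF S' k] ch piv faces
            pivot_chain_between[OF \<sigma> k] pivot_chain_triangle[OF \<sigma> k] qc wc] by blast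
      have eq: "stage2_chains n k w (insert \<sigma> S) = stage2_chains n k w S \<union> {C. C \<subseteq> \<sigma>}"
        by (auto simp: stage2_chains_def)
      have "\<forall>m. \<forall>c\<in>?H m. G'' m c = G m c"
      proof (intro allI ballI)
        fix m c assume "c \<in> ?H m"
        moreover have "?H m \<subseteq> spanned le (sdposet n) (stage2_chains n k w S) m"
          by (rule spanned_mono[OF horn_chains_subset_stage2])
        ultimately have "G'' m c = G' m c" using agree' by blast
        then show "G'' m c = G m c" using agree \<open>c \<in> ?H m\<close> by simp
      qed
      then show "\<exists>G'. marked_map_on le (sdposet n) (Sd_mark n) (stage2_chains n k w (insert \<sigma> S)) X W G' \<and>
          (\<forall>m. \<forall>c\<in>?H m. G' m c = G m c)" unfolding eq using G'' by blast
    qed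
  qed (use G in blast)
  obtain G' where G': "marked_map_on le (sdposet n) (Sd_mark n) (stage2_chains n k w (pivot_chains n k w)) X W G'"
    and agree: "\<forall>m. \<forall>c\<in>?H m. G' m c = G m c"
    using ind[OF finite_pivot_chains] by blast
  have "spanned le (sdposet n) (stage2_chains n k (Suc w) {}) m \<subseteq>
      spanned le (sdposet n) (stage2_chains n k w (pivot_chains n k w)) m" for m
  proof
    fix c assume "c \<in> spanned le (sdposet n) (stage2_chains n k (Suc w) {}) m"
    then have c: "c \<in> cells (Sd n) m" "c ` {0..m} \<in> stage2_chains n k (Suc w) {}"
      by (simp_all add: spanned_iff Sd_def)
    then show "c \<in> spanned le (sdposet n) (stage2_chains n k w (pivot_chains n k w)) m"
      using stage2_chains_Suc[OF sd_chain_of_simplex[OF c(1)] c(2) k] by (simp add: spanned_iff Sd_def)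
  qed
  then have "marked_map_on le (sdposet n) (Sd_mark n) (stage2_chains n k (Suc w) {}) X W G'"
    by (rule marked_map_on_mono[OF G'])
  then show ?thesis using agree by blast
qed


lemma extend_to_stage2:
  assumes G: "marked_map_on le (sdposet n) (Sd_mark n) (stage1_chains n k) X W G"
    and k: "k \<le> n" and qc: "quasicategory X" and wc: "weakly_closed X W"
  shows "\<exists>G'. marked_map_on le (sdposet n) (Sd_mark n) (stage2_chains n k w {}) X W G' \<and>
              (\<forall>m. \<forall>c\<in>spanned le (sdposet n) (horn_chains n k) m. G' m c = G m c)"
proof (induction w)
  case 0
  show ?case unfolding stage2_chains_0 using G by blast
next
  case (Suc w)
  then obtain G' where G': "marked_map_on le (sdposet n) (Sd_mark n) (stage2_chains n k w {}) X W G'"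
    and agree: "\<forall>m. \<forall>c\<in>spanned le (sdposet n) (horn_chains n k) m. G' m c = G m c"
    by blast
  obtain G'' where "marked_map_on le (sdposet n) (Sd_mark n) (stage2_chains n k (Suc w) {}) X W G''"
    and "\<forall>m. \<forall>c\<in>spanned le (sdposet n) (horn_chains n k) m. G'' m c = G' m c"
    using extend_to_next_rank[OF G' k qc wc] by blast
  then show ?case using agree by auto
qed

lemma marked_map_on_UNIV:
  "marked_map_on le (sdposet n) (Sd_mark n) UNIV X W G \<longleftrightarrow> marked_map (Sd n) (Sd_mark n) X W G"
proof -
  have "Sd_mark n \<inter> cells (Sd n) 1 = Sd_mark n" by (auto simp: Sd_mark_def)
  then show ?thesis by (simp add: marked_map_on_def spanned_UNIV Sd_def)
qed

text \<open>For \<open>0 < k < n\<close> the facet \<open>[n] - {k}\<close> has the same maximum and minimum as \<open>[n]\<close>, so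
  collapsing it onto \<open>[n]\<close> is a marked retraction of \<open>sd[n]\<close> onto the chains avoiding it.\<close>

lemma extend_to_Sd:
  assumes F: "marked_map_on le (sdposet n) (Sd_mark n) (horn_chains n k) X W F" and k: "0 < k" "k < n"
    and qc: "quasicategory X" and wc: "weakly_closed X W"
    and lift: "mrlp (Lnerve n k) (Lnerve_mark n k) (LJnerve n k) X W"
  obtains G where "marked_map (Sd n) (Sd_mark n) X W G"
    and "\<And>j c. c \<in> spanned le (sdposet n) (horn_chains n k) j \<Longrightarrow> G j c = F j c"
proof -
  let ?D = "stage2_chains n k (rank_base n * rank_base n) {}"
  obtain G1 where G1: "marked_map_on le (sdposet n) (Sd_mark n) (stage1_chains n k) X W G1"
    and agree1: "\<forall>m. \<forall>c\<in>spanned le (sdposet n) (horn_chains n k) m. G1 m c = F m c"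
    using extend_to_stage1[OF F _ lift] k by auto
  obtain G2 where G2: "marked_map_on le (sdposet n) (Sd_mark n) ?D X W G2"
    and agree2: "\<forall>m. \<forall>c\<in>spanned le (sdposet n) (horn_chains n k) m. G2 m c = G1 m c"
    using extend_to_stage2[OF G1 _ qc wc, of "rank_base n * rank_base n"] k by auto
  define collapse where "collapse A = (if A = {0..n} - {k} then {0..n} else A)" for A
  have ends: "Max ({0..n} - {k}) = n" "Max {0..n} = n" "Min ({0..n} - {k}) = 0" "Min {0..n} = 0"
    using k by (auto intro!: Max_eqI Min_eqI)
  have facet_sup: "A = {0..n} - {k} \<or> A = {0..n}" if "{0..n} - {k} \<subseteq> A" "A \<subseteq> {0..n}" for A
    using that by blast
  have "k \<in> {0..n}" using k by simp
  then have "{0..n} \<noteq> {0..n} - {k}" by blast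
  then have collapse_ne: "collapse A \<noteq> {0..n} - {k}" for A unfolding collapse_def by simp
  have collapse_in: "collapse A \<in> sdposet n" if "A \<in> sdposet n" for A
    using that by (auto simp: collapse_def sdposet_def)
  have collapse_le: "le (collapse A) (collapse A')" if A: "A \<in> sdposet n" "A' \<in> sdposet n" "le A A'" for A A'
  proof -
    have sub: "A \<subseteq> {0..n}" "A' \<subseteq> {0..n}" using A by (auto simp: sdposet_def)
    from le_mu_cases consider "le = (\<subseteq>)" | "le = (\<supseteq>)" by blast
    then show ?thesis
    proof cases
      case 1
      then show ?thesis using A(3) facet_sup[of A'] sub unfolding collapse_def by auto
    next
      case 2
      then show ?thesis using A(3) facet_sup[of A] sub unfolding collapse_def by auto
    qed
  qed
  have mu_collapse: "mu (collapse A) = mu A" for A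
    using le_mu_cases ends by (auto simp: collapse_def)
  have into: "nerve_map collapse j c \<in> spanned le (sdposet n) ?D j"
    if c: "c \<in> cells (nerve (sdposet n) le) j" for j c
  proof -
    have cells: "nerve_map collapse j c \<in> cells (Sd n) j"
      unfolding Sd_def using c collapse_in collapse_le by (intro nerve_map_cells) (auto simp: cells_nerve)
    have "{0..n} - {k} \<notin> nerve_map collapse j c ` {0..j}"
      unfolding image_nerve_map using collapse_ne by blast
    then show ?thesis
      using stage2_chains_final[OF sd_chain_of_simplex[OF cells]] cells k by (simp add: spanned_iff Sd_def)
  qed
  have "marked_map (subsset (nerve (sdposet n) le) (cells (nerve (sdposet n) le))) (Sd_mark n) X W
      (\<lambda>j c. G2 j (nerve_map collapse j c))"
  proof (rule marked_map_nerve_map[OF G2[unfolded marked_map_on_def]])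
    show "nerve_map collapse 1 c \<in> Sd_mark n \<inter> spanned le (sdposet n) ?D 1" if c: "c \<in> Sd_mark n" for c
    proof
      have c1: "c \<in> cells (nerve (sdposet n) le) 1" "mu (c 0) = mu (c 1)" using c by (auto simp: Sd_mark_def Sd_def)
      show "nerve_map collapse 1 c \<in> spanned le (sdposet n) ?D 1" by (rule into[OF c1(1)])
      then show "nerve_map collapse 1 c \<in> Sd_mark n"
        using c1(2) mu_collapse by (simp add: Sd_mark_def spanned_iff Sd_def nerve_map_def)
    qed
  qed (rule into)
  moreover have "G2 j (nerve_map collapse j c) = F j c"
    if c: "c \<in> spanned le (sdposet n) (horn_chains n k) j" for j c
  proof -
    have c': "c \<in> cells (Sd n) j" "\<Union>(c ` {0..j}) \<union> {k} \<noteq> {0..n}"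
      using c by (simp_all add: spanned_iff horn_chains_def Sd_def)
    have "{0..n} - {k} \<notin> c ` {0..j}"
      using horn_chain_avoids_facet[OF sd_chain_of_simplex[OF c'(1)] c'(2)] k by simp
    then have "nerve_map collapse j c = c"
      using c' unfolding Sd_def by (intro nerve_map_fixed) (auto simp: collapse_def)
    then show ?thesis using agree1 agree2 c by simp
  qed
  ultimately show ?thesis using that by (simp add: Sd_def)
qed

lemma quasicategory_Ex:
  assumes qc: "quasicategory X" and wc: "weakly_closed X W"
    and lifts: "\<And>n k. 0 < k \<Longrightarrow> k < n \<Longrightarrow> mrlp (Lnerve n k) (Lnerve_mark n k) (LJnerve n k) X W"
  shows "quasicategory (Ex X W)"
  unfolding quasicategory_def
proof (intro conjI allI impI is_sset_Ex)
  fix n k :: nat assume k: "0 < k" "k < n"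
  show "rlp (Delta n) (horn n k) (Ex X W)"
    unfolding rlp_def
  proof (intro allI impI)
    fix f assume f: "smap (subsset (Delta n) (horn n k)) (Ex X W) f"
    obtain F where F: "marked_map_on le (sdposet n) (Sd_mark n) (horn_chains n k) X W F"
      and f_F: "\<And>m s j d. s \<in> horn n k m \<Longrightarrow> d \<in> cells (Sd m) j \<Longrightarrow> f m s j d = F j (sd_map s j d)"
      using horn_to_sd[OF f] k by auto
    obtain G where G: "marked_map (Sd n) (Sd_mark n) X W G"
      and G_F: "\<And>j c. c \<in> spanned le (sdposet n) (horn_chains n k) j \<Longrightarrow> G j c = F j c"
      using extend_to_Sd[OF F k qc wc lifts[OF k]] by blast
    define g where "g m s j d = (if d \<in> cells (Sd m) j then G j (sd_map s j d) else undefined)" for m s j d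
    have "smap (subsset (Delta n) (cells (Delta n))) (Ex X W) g"
      unfolding g_def using G by (intro smap_into_Ex) (auto simp: marked_map_on_UNIV)
    moreover have "g m s = f m s" if s: "s \<in> horn n k m" for m s
    proof (intro ext)
      fix j d
      show "g m s j d = f m s j d"
      proof (cases "d \<in> cells (Sd m) j")
        case True
        then show ?thesis using f_F[OF s True] G_F[OF sd_map_horn_chains[OF s True]] k by (simp add: g_def)
      next
        case False
        have "f m s \<in> cells (Ex X W) m" using f s unfolding smap_def by auto
        then show ?thesis using False by (simp add: g_def cells_Ex)
      qed
    qed
    ultimately show "\<exists>g. smap (Delta n) (Ex X W) g \<and> (\<forall>m. \<forall>a\<in>horn n k m. g m a = f m a)" by auto
  qed
qed

end

section \<open>Lifting properties of the base from horn fillers in Ex\<close>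

context subdivision
begin

lemma Ex_filler_restricts:
  assumes k: "k \<le> N" and g: "smap (Delta N) (Ex X W) g"
    and g_ext: "\<And>m s. s \<in> horn N k m \<Longrightarrow>
                  g m s = (\<lambda>j d. if d \<in> cells (Sd m) j then F j (sd_map s j d) else undefined)"
    and d: "d \<in> spanned le (sdposet N) (horn_chains N k) j"
  shows "g N (\<lambda>i. if i \<le> N then i else undefined) j d = F j d"
proof -
  define idN where "idN = (\<lambda>i. if i \<le> N then i else (undefined :: nat))"
  define S where "S = \<Union>(d ` {0..j}) \<union> {k}"
  have dc: "d \<in> cells (Sd N) j" using d by (simp add: spanned_iff Sd_def)
  have S: "S \<subseteq> {0..N}" "k \<in> S" "S \<noteq> {0..N}" "S \<noteq> {}"
    using d dc k unfolding S_def spanned_iff horn_chains_def cells_Sd by auto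
  let ?r = "retract_simplex N S"
  have r: "?r \<in> cells (Delta N) N" by (rule retract_simplex_cells[OF S(1,4)])
  have idN: "idN \<in> cells (Delta N) N" by (auto simp: cells_Delta idN_def)
  have d_fixed: "sd_map ?r j d = d" by (rule sd_map_retract[OF dc S(1)]) (auto simp: S_def)
  have g': "smap (subsset (Delta N) (cells (Delta N))) (Ex X W) g" using g by simp
  have "?r i \<le> N" if "i \<le> N" for i using r that by (simp add: cells_Delta)
  then have "g N ?r j d = g N idN j (sd_map ?r j d)"
    by (intro smap_Ex_face[OF g' r idN _ dc]) (simp add: idN_def)
  moreover have "g N ?r j d = F j (sd_map ?r j d)"
    using g_ext[OF retract_simplex_horn[OF S(1-3)]] dc by simp
  ultimately show ?thesis using d_fixed by (simp add: idN_def)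
qed

text \<open>A marked map on \<open>LJ\<close> is transported along the embedding \<open>iL\<close> into the horn part of
  \<open>sd[N]\<close> through the marked retraction \<open>rL\<close>; a filler of the resulting horn of \<open>Ex\<close>,
  restricted back along \<open>iL\<close>, extends it.\<close>

lemma mrlp_from_Ex_horn:
  assumes qE: "rlp (Delta N) (horn N k') (Ex X W)" and k': "k' \<le> N"
    and iL_in: "\<And>A. A \<in> Lposet n k \<Longrightarrow> iL A \<in> sdposet N"
    and iL_le: "\<And>A A'. A \<in> Lposet n k \<Longrightarrow> A' \<in> Lposet n k \<Longrightarrow> le A A' \<Longrightarrow> le (iL A) (iL A')"
    and iL_mu: "\<And>A A'. A \<in> Lposet n k \<Longrightarrow> A' \<in> Lposet n k \<Longrightarrow> mu A = mu A' \<Longrightarrow> mu (iL A) = mu (iL A')"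
    and retract: "\<And>A. A \<in> Lposet n k \<Longrightarrow> A \<noteq> {0..n} \<Longrightarrow> rL (iL A) = A"
    and iL_horn: "\<And>m c. c \<in> LJnerve n k m \<Longrightarrow> iL ` c ` {0..m} \<in> horn_chains N k'"
    and rL_in: "\<And>m c i. c \<in> spanned le (sdposet N) (horn_chains N k') m \<Longrightarrow> i \<le> m \<Longrightarrow>
                  rL (c i) \<in> Lposet n k \<and> rL (c i) \<noteq> {0..n}"
    and rL_le: "\<And>A A'. A \<in> sdposet N \<Longrightarrow> A' \<in> sdposet N \<Longrightarrow> le A A' \<Longrightarrow> le (rL A) (rL A')"
    and rL_mu: "\<And>A A'. A \<in> sdposet N \<Longrightarrow> A' \<in> sdposet N \<Longrightarrow> mu A = mu A' \<Longrightarrow> mu (rL A) = mu (rL A')"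
  shows "mrlp (Lnerve n k) (Lnerve_mark n k) (LJnerve n k) X W"
  unfolding mrlp_def
proof (intro allI impI)
  fix \<phi> assume \<phi>: "marked_map (subsset (Lnerve n k) (LJnerve n k)) (Lnerve_mark n k \<inter> LJnerve n k 1) X W \<phi>"
  let ?H = "spanned le (sdposet N) (horn_chains N k')"
  define F where "F j c = \<phi> j (nerve_map rL j c)" for j c
  have rL_LJ: "nerve_map rL j c \<in> LJnerve n k j" if c: "c \<in> ?H j" for j c
  proof -
    have "nerve_map rL j c \<in> cells (Lnerve n k) j"
      unfolding Lnerve_def using c rL_in rL_le
      by (intro nerve_map_cells[of c "sdposet N" le]) (auto simp: spanned_iff cells_nerve)
    then show ?thesis using rL_in[OF c] by (simp add: LJnerve_def nerve_map_def)
  qed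
  have F: "marked_map_on le (sdposet N) (Sd_mark N) (horn_chains N k') X W F"
    unfolding marked_map_on_def F_def Lnerve_def[symmetric]
  proof (rule marked_map_nerve_map[OF \<phi>[unfolded Lnerve_def]])
    show "nerve_map rL 1 c \<in> Lnerve_mark n k \<inter> LJnerve n k 1" if "c \<in> Sd_mark N \<inter> ?H 1" for c
      using that rL_LJ[of c 1] rL_mu unfolding Sd_mark_def Lnerve_mark_def LJnerve_def
      by (auto simp: nerve_map_def spanned_iff cells_nerve)
  qed (rule rL_LJ)
  define f where "f m s j d = (if d \<in> cells (Sd m) j then F j (sd_map s j d) else undefined)" for m s j d
  have "smap (subsset (Delta N) (horn N k')) (Ex X W) f"
    unfolding f_def
  proof (rule smap_into_Ex[OF F])
    show "horn N k' m \<subseteq> cells (Delta N) m" for m by (auto simp: horn_def)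
    show "sd_map s j d ` {0..j} \<in> horn_chains N k'" if "s \<in> horn N k' m" "d \<in> cells (Sd m) j" for m s j d
      using sd_map_horn_chains[OF that k'] by (simp add: spanned_iff)
  qed
  then obtain g where g: "smap (Delta N) (Ex X W) g" and g_ext: "\<And>m s. s \<in> horn N k' m \<Longrightarrow> g m s = f m s"
    using qE unfolding rlp_def by blast
  define G where "G = g N (\<lambda>i. if i \<le> N then i else undefined)"
  have G: "marked_map (Sd N) (Sd_mark N) X W G"
    using g unfolding G_def smap_def by (auto simp: cells_Ex cells_Delta)
  have G_F: "G j c = F j c" if "c \<in> ?H j" for j c
    unfolding G_def using Ex_filler_restricts[OF k' g _ that] g_ext by (simp add: f_def fun_eq_iff)
  have iL_cells: "nerve_map iL j c \<in> cells (Sd N) j" if "c \<in> cells (Lnerve n k) j" for j c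
    unfolding Sd_def using that iL_in iL_le
    by (intro nerve_map_cells[of c "Lposet n k" le]) (auto simp: Lnerve_def cells_nerve)
  have G': "marked_map (subsset (nerve (sdposet N) le) (cells (nerve (sdposet N) le))) (Sd_mark N) X W G"
    using G by (simp add: Sd_def)
  have "marked_map (subsset (Lnerve n k) (cells (Lnerve n k))) (Lnerve_mark n k) X W (\<lambda>j c. G j (nerve_map iL j c))"
    unfolding Lnerve_def
  proof (rule marked_map_nerve_map[OF G'])
    show "nerve_map iL j c \<in> cells (nerve (sdposet N) le) j" if "c \<in> cells (nerve (Lposet n k) le) j" for j c
      using iL_cells[of c j] that by (simp add: Lnerve_def Sd_def)
    show "nerve_map iL 1 c \<in> Sd_mark N" if "c \<in> Lnerve_mark n k" for c
      using that iL_cells[of c 1] iL_mu unfolding Lnerve_mark_def Sd_mark_def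
      by (auto simp: nerve_map_def Lnerve_def cells_nerve)
  qed
  moreover have "G j (nerve_map iL j c) = \<phi> j c" if c: "c \<in> LJnerve n k j" for j c
  proof -
    have cL: "c \<in> cells (Lnerve n k) j" using c by (simp add: LJnerve_def)
    have "nerve_map iL j c \<in> ?H j"
      using iL_cells[OF cL] iL_horn[OF c] by (simp add: spanned_iff image_nerve_map Sd_def)
    moreover have "nerve_map rL j (nerve_map iL j c) = c"
      unfolding nerve_map_nerve_map using cL c retract
      by (intro nerve_map_fixed[of c "Lposet n k" le]) (auto simp: Lnerve_def LJnerve_def cells_nerve)
    ultimately show ?thesis using G_F by (simp add: F_def)
  qed
  ultimately show "\<exists>g. marked_map (Lnerve n k) (Lnerve_mark n k) X W g \<and>
      (\<forall>m. \<forall>a\<in>LJnerve n k m. g m a = \<phi> m a)" by auto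
qed


lemma mrlp_Lnerve_inner:
  assumes qE: "quasicategory (Ex X W)" and k: "0 < k" "k < n"
  shows "mrlp (Lnerve n k) (Lnerve_mark n k) (LJnerve n k) X W"
proof (rule mrlp_from_Ex_horn[where N = n and k' = k and iL = id and rL = "\<lambda>A. A \<union> {k}"])
  show "rlp (Delta n) (horn n k) (Ex X W)" using qE k by (simp add: quasicategory_def)
  show "id ` c ` {0..m} \<in> horn_chains n k" if c: "c \<in> LJnerve n k m" for m c
  proof -
    have cL: "c \<in> cells (Lnerve n k) m" using c by (simp add: LJnerve_def)
    obtain i where "i \<le> m" "\<Union>(c ` {0..m}) \<union> {k} = c i" by (rule Union_Lnerve_simplex[OF cL])
    then show ?thesis using c by (simp add: horn_chains_def LJnerve_def)
  qed
  show "c i \<union> {k} \<in> Lposet n k \<and> c i \<union> {k} \<noteq> {0..n}"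
    if c: "c \<in> spanned le (sdposet n) (horn_chains n k) m" and i: "i \<le> m" for m c i
  proof -
    have U: "c i \<union> {k} \<subseteq> \<Union>(c ` {0..m}) \<union> {k}" using i by auto
    have T: "\<Union>(c ` {0..m}) \<union> {k} \<subseteq> {0..n}" using c k by (auto simp: spanned_iff cells_nerve sdposet_def)
    have "\<Union>(c ` {0..m}) \<union> {k} \<noteq> {0..n}" using c by (simp add: spanned_iff horn_chains_def)
    then have "c i \<union> {k} \<noteq> {0..n}" using U T by blast
    moreover have "c i \<union> {k} \<subseteq> {0..n}" using U T by (rule order_trans)
    ultimately show ?thesis by (simp add: Lposet_def)
  qed
  show "le (A \<union> {k}) (A' \<union> {k})" if "le A A'" for A A' using that le_mu_cases by auto
  show "mu (A \<union> {k}) = mu (A' \<union> {k})" if A: "A \<in> sdposet n" "A' \<in> sdposet n" "mu A = mu A'" for A A'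
  proof -
    have A1: "finite A" "A \<noteq> {}" and A2: "finite A'" "A' \<noteq> {}"
      using A by (auto simp: sdposet_def intro: finite_subset)
    show ?thesis
      using le_mu_cases A(3) Max_insert[OF A1, of k] Max_insert[OF A2, of k] Min_insert[OF A1, of k]
        Min_insert[OF A2, of k]
      by auto
  qed
qed (use k in \<open>auto simp: Lposet_def sdposet_def\<close>)

end

interpretation sd_plus: subdivision "(\<subseteq>)" Max by unfold_locales simp

interpretation sd_op: subdivision "(\<supseteq>)" Min by unfold_locales simp

lemma sd_plus_Ex: "sd_plus.Ex X W = Ex_plus X W"
proof -
  have "sd_plus.Sd = sd" "sd_plus.Sd_mark = sdmark"
    by (auto simp: fun_eq_iff sd_plus.Sd_def sd_def sd_plus.Sd_mark_def sdmark_def)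
  then show ?thesis by (simp add: sd_plus.Ex_def Ex_plus_def)
qed

lemma sd_op_Ex: "sd_op.Ex X W = Ex_op_plus X W"
proof -
  have "sd_op.Sd = sdop" "sd_op.Sd_mark = sdopmark"
    by (auto simp: fun_eq_iff sd_op.Sd_def sdop_def sd_op.Sd_mark_def sdopmark_def)
  then show ?thesis by (simp add: sd_op.Ex_def Ex_op_plus_def)
qed

lemma sd_plus_L: "sd_plus.Lnerve n k = L n k" "sd_plus.Lnerve_mark n k = Lmark n k" "sd_plus.LJnerve n k = LJ n k"
  by (auto simp: sd_plus.Lnerve_def L_def sd_plus.Lnerve_mark_def Lmark_def sd_plus.LJnerve_def LJ_def fun_eq_iff)

lemma sd_op_R: "sd_op.Lnerve n k = R n k" "sd_op.Lnerve_mark n k = Rmark n k" "sd_op.LJnerve n k = RJ n k"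
  by (auto simp: sd_op.Lnerve_def R_def sd_op.Lnerve_mark_def Rmark_def sd_op.LJnerve_def RJ_def fun_eq_iff)

text \<open>\<open>L\<^sup>n\<^sub>n\<close> embeds into \<open>sd[n+1]\<close> by renaming the vertex \<open>n\<close> to \<open>n+1\<close>; its simplices avoiding
  \<open>[n]\<close> land in the horn \<open>\<Lambda>\<^sup>n\<^sup>+\<^sup>1\<^sub>n\<close>.\<close>

definition lift_top :: "nat \<Rightarrow> nat set \<Rightarrow> nat set" where
  "lift_top n A = A - {n} \<union> {Suc n}"

definition drop_top :: "nat \<Rightarrow> nat set \<Rightarrow> nat set" where
  "drop_top n A = (if Suc n \<in> A then A \<inter> {0..<n} \<union> {n} else {n})"

lemma drop_top_in_LJ:
  assumes c: "c \<in> spanned (\<subseteq>) (sdposet (Suc n)) (horn_chains (Suc n) n) m" and i: "i \<le> m" and n: "0 < n"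
  shows "drop_top n (c i) \<in> Lposet n n \<and> drop_top n (c i) \<noteq> {0..n}"
proof (cases "Suc n \<in> c i")
  case True
  have "\<Union>(c ` {0..m}) \<union> {n} \<noteq> {0..Suc n}" "\<Union>(c ` {0..m}) \<union> {n} \<subseteq> {0..Suc n}"
    using c by (auto simp: spanned_iff horn_chains_def cells_nerve sdposet_def)
  then obtain x where x: "x \<in> {0..Suc n}" "x \<notin> \<Union>(c ` {0..m}) \<union> {n}" by blast
  then have "x < n" "x \<notin> c i" using True i by (auto simp: le_Suc_eq)
  then show ?thesis by (auto simp: drop_top_def Lposet_def)
next
  case False
  have "0 \<in> {0..n}" "0 \<notin> {n}" using n by auto
  then have "{n} \<noteq> {0..n}" by blast
  then show ?thesis using False by (simp add: drop_top_def Lposet_def)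
qed

lemma mrlp_L_top:
  assumes qE: "quasicategory (Ex_plus X W)" and n: "2 \<le> n"
  shows "mrlp (L n n) (Lmark n n) (LJ n n) X W"
proof -
  have Max_lift: "Max (lift_top n A) = Suc n" if "A \<subseteq> {0..n}" for A
    using that by (intro Max_eqI) (auto simp: lift_top_def intro: finite_subset)
  have Max_drop: "Max (drop_top n A) = n" for A
    by (intro Max_eqI) (auto simp: drop_top_def split: if_split_asm)
  have "mrlp (sd_plus.Lnerve n n) (sd_plus.Lnerve_mark n n) (sd_plus.LJnerve n n) X W"
  proof (rule sd_plus.mrlp_from_Ex_horn[where N = "Suc n" and k' = n and iL = "lift_top n" and rL = "drop_top n"])
    show "rlp (Delta (Suc n)) (horn (Suc n) n) (sd_plus.Ex X W)"
      using qE n by (simp add: quasicategory_def sd_plus_Ex)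
    show "lift_top n ` c ` {0..m} \<in> horn_chains (Suc n) n" if c: "c \<in> sd_plus.LJnerve n n m" for m c
    proof -
      have cL: "c \<in> cells (sd_plus.Lnerve n n) m" using c by (simp add: sd_plus.LJnerve_def)
      obtain i where i: "i \<le> m" "\<Union>(c ` {0..m}) \<union> {n} = c i" by (rule sd_plus.Union_Lnerve_simplex[OF cL])
      have "c i \<subseteq> {0..n}" "c i \<noteq> {0..n}"
        using c i(1) by (auto simp: sd_plus.LJnerve_def sd_plus.Lnerve_def cells_nerve Lposet_def)
      then obtain x where x: "x \<in> {0..n}" "x \<notin> c i" by blast
      then have "x \<notin> \<Union>(lift_top n ` c ` {0..m}) \<union> {n}" using i by (auto simp: lift_top_def)
      then show ?thesis using x(1) by (auto simp: horn_chains_def)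
    qed
    show "drop_top n (c i) \<in> Lposet n n \<and> drop_top n (c i) \<noteq> {0..n}"
      if "c \<in> spanned (\<subseteq>) (sdposet (Suc n)) (horn_chains (Suc n) n) m" "i \<le> m" for m c i
      using drop_top_in_LJ[OF that] n by simp
    show "drop_top n (lift_top n A) = A" if "A \<in> Lposet n n" for A
      using that by (auto simp: drop_top_def lift_top_def Lposet_def)
  qed (use Max_lift Max_drop in \<open>auto simp: lift_top_def drop_top_def Lposet_def sdposet_def\<close>)
  then show ?thesis by (simp add: sd_plus_L)
qed

text \<open>Dually, \<open>R\<^sup>n\<^sub>0\<close> embeds into \<open>sd[n+1]\<close> by shifting the vertices \<open>1, \<dots>, n\<close> up by one; its
  simplices avoiding \<open>[n]\<close> land in the horn \<open>\<Lambda>\<^sup>n\<^sup>+\<^sup>1\<^sub>1\<close>.\<close>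

definition lift_bottom :: "nat set \<Rightarrow> nat set" where
  "lift_bottom A = insert 0 (Suc ` (A - {0}))"

definition drop_bottom :: "nat set \<Rightarrow> nat set" where
  "drop_bottom A = (if 0 \<in> A then insert 0 ((\<lambda>x. x - 1) ` (A \<inter> {2..})) else {0})"

lemma drop_bottom_lift_bottom: "0 \<in> A \<Longrightarrow> drop_bottom (lift_bottom A) = A"
proof -
  assume "0 \<in> A"
  moreover have "lift_bottom A \<inter> {2..} = Suc ` (A - {0})" by (auto simp: lift_bottom_def)
  moreover have "(\<lambda>x. x - 1) ` Suc ` (A - {0}) = A - {0}" by (auto simp: image_image)
  ultimately show ?thesis by (auto simp: drop_bottom_def lift_bottom_def)
qed

lemma drop_bottom_in_RJ:
  assumes c: "c \<in> spanned (\<supseteq>) (sdposet (Suc n)) (horn_chains (Suc n) 1) m" and i: "i \<le> m" and n: "0 < n"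
  shows "drop_bottom (c i) \<in> Lposet n 0 \<and> drop_bottom (c i) \<noteq> {0..n}"
proof (cases "0 \<in> c i")
  case True
  have ci: "c i \<subseteq> {0..Suc n}" using c i by (auto simp: spanned_iff cells_nerve sdposet_def)
  have "\<Union>(c ` {0..m}) \<union> {1} \<noteq> {0..Suc n}" "\<Union>(c ` {0..m}) \<union> {1} \<subseteq> {0..Suc n}"
    using c by (auto simp: spanned_iff horn_chains_def cells_nerve sdposet_def)
  then obtain x where x: "x \<in> {0..Suc n}" "x \<notin> \<Union>(c ` {0..m}) \<union> {1}" by blast
  have "x \<notin> c i" using x(2) i by auto
  moreover have "x \<noteq> 0" using True \<open>x \<notin> c i\<close> by (cases "x = 0") auto
  moreover have "x \<noteq> 1" using x(2) by auto
  ultimately have x2: "2 \<le> x" "x \<notin> c i" by auto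
  have "x - 1 \<notin> (\<lambda>y. y - 1) ` (c i \<inter> {2..})"
  proof
    assume "x - 1 \<in> (\<lambda>y. y - 1) ` (c i \<inter> {2..})"
    then obtain y where y: "y \<in> c i" "2 \<le> y" "x - 1 = y - 1" by auto
    then have "y = x" using x2(1) by linarith
    then show False using y(1) x2(2) by simp
  qed
  then have "x - 1 \<notin> drop_bottom (c i)" using True x2(1) by (simp add: drop_bottom_def)
  moreover have "drop_bottom (c i) \<in> Lposet n 0" using True ci by (auto simp: drop_bottom_def Lposet_def)
  moreover have "x - 1 \<in> {0..n}" using x(1) by auto
  ultimately show ?thesis by blast
next
  case False
  have "n \<in> {0..n}" "n \<notin> {0}" using n by auto
  then have "{0} \<noteq> {0..n}" by blast
  then show ?thesis using False by (simp add: drop_bottom_def Lposet_def)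
qed

lemma mrlp_R_bottom:
  assumes qE: "quasicategory (Ex_op_plus X W)" and n: "2 \<le> n"
  shows "mrlp (R n 0) (Rmark n 0) (RJ n 0) X W"
proof -
  have Min_lift: "Min (lift_bottom A) = 0" if "A \<subseteq> {0..n}" for A
    using that by (intro Min_eqI) (auto simp: lift_bottom_def intro: finite_subset)
  have Min_drop: "Min (drop_bottom A) = 0" if "A \<subseteq> {0..Suc n}" for A
    using that by (intro Min_eqI) (auto simp: drop_bottom_def intro: finite_subset)
  have "mrlp (sd_op.Lnerve n 0) (sd_op.Lnerve_mark n 0) (sd_op.LJnerve n 0) X W"
  proof (rule sd_op.mrlp_from_Ex_horn[where N = "Suc n" and k' = 1 and iL = lift_bottom and rL = drop_bottom])
    show "rlp (Delta (Suc n)) (horn (Suc n) 1) (sd_op.Ex X W)"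
      using qE n by (simp add: quasicategory_def sd_op_Ex)
    show "lift_bottom ` c ` {0..m} \<in> horn_chains (Suc n) 1" if c: "c \<in> sd_op.LJnerve n 0 m" for m c
    proof -
      have cL: "c \<in> cells (sd_op.Lnerve n 0) m" using c by (simp add: sd_op.LJnerve_def)
      obtain i where i: "i \<le> m" "\<Union>(c ` {0..m}) \<union> {0} = c i" by (rule sd_op.Union_Lnerve_simplex[OF cL])
      have ci: "c i \<subseteq> {0..n}" "c i \<noteq> {0..n}" "0 \<in> c i"
        using c i(1) by (auto simp: sd_op.LJnerve_def sd_op.Lnerve_def cells_nerve Lposet_def)
      then obtain x where "x \<in> {0..n}" "x \<notin> c i" by blast
      moreover have "x \<noteq> 0" if "x \<notin> c i" for x using ci(3) that by (cases "x = 0") auto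
      ultimately have x: "x \<in> {0..n}" "x \<notin> c i" "x \<noteq> 0" by auto
      then have "Suc x \<notin> \<Union>(lift_bottom ` c ` {0..m}) \<union> {1}" using i by (auto simp: lift_bottom_def)
      moreover have "Suc x \<in> {0..Suc n}" using x(1) by simp
      ultimately show ?thesis unfolding horn_chains_def by blast
    qed
    show "drop_bottom (c i) \<in> Lposet n 0 \<and> drop_bottom (c i) \<noteq> {0..n}"
      if "c \<in> spanned (\<supseteq>) (sdposet (Suc n)) (horn_chains (Suc n) 1) m" "i \<le> m" for m c i
      using drop_bottom_in_RJ[OF that] n by simp
    show "drop_bottom (lift_bottom A) = A" if "A \<in> Lposet n 0" for A
      using that drop_bottom_lift_bottom by (simp add: Lposet_def)
    show "drop_bottom A' \<subseteq> drop_bottom A" if "A' \<subseteq> A" for A A'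
      using that by (auto simp: drop_bottom_def)
  qed (use Min_lift Min_drop in \<open>auto simp: lift_bottom_def Lposet_def sdposet_def\<close>)
  then show ?thesis by (simp add: sd_op_R)
qed


lemma mrlp_L_of_quasicategory_Ex_plus:
  assumes qE: "quasicategory (Ex_plus X W)" and n: "2 \<le> n" and k: "0 < k" "k \<le> n"
  shows "mrlp (L n k) (Lmark n k) (LJ n k) X W"
proof (cases "k = n")
  case True
  then show ?thesis using mrlp_L_top[OF qE n] by simp
next
  case False
  then show ?thesis using sd_plus.mrlp_Lnerve_inner[of X W k n] qE k by (simp add: sd_plus_Ex sd_plus_L)
qed

lemma mrlp_R_of_quasicategory_Ex_op_plus:
  assumes qE: "quasicategory (Ex_op_plus X W)" and n: "2 \<le> n" and k: "k < n"
  shows "mrlp (R n k) (Rmark n k) (RJ n k) X W"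
proof (cases "k = 0")
  case True
  then show ?thesis using mrlp_R_bottom[OF qE n] by simp
next
  case False
  then show ?thesis using sd_op.mrlp_Lnerve_inner[of X W k n] qE k by (simp add: sd_op_Ex sd_op_R)
qed

lemma quasicategory_Ex_plus:
  assumes "quasicategory X" "CLF X W"
  shows "quasicategory (Ex_plus X W)"
  using sd_plus.quasicategory_Ex[of X W] assms by (simp add: CLF_def sd_plus_Ex sd_plus_L)

lemma quasicategory_Ex_op_plus:
  assumes "quasicategory X" "CRF X W"
  shows "quasicategory (Ex_op_plus X W)"
  using sd_op.quasicategory_Ex[of X W] assms by (simp add: CRF_def sd_op_Ex sd_op_R)

theorem theorem7p5:
  fixes X :: "'a sset" and W :: "'a set"
  assumes "marked_sset X W"
  shows "(quasicategory (Ex_plus X W) \<longrightarrow>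
            (\<forall>n k. 2 \<le> n \<longrightarrow> 0 < k \<longrightarrow> k \<le> n \<longrightarrow> mrlp (L n k) (Lmark n k) (LJ n k) X W))
       \<and> (quasicategory X \<and> CLF X W \<longrightarrow> quasicategory (Ex_plus X W))
       \<and> (quasicategory (Ex_op_plus X W) \<longrightarrow>
            (\<forall>n k. 2 \<le> n \<longrightarrow> k < n \<longrightarrow> mrlp (R n k) (Rmark n k) (RJ n k) X W))
       \<and> (quasicategory X \<and> CRF X W \<longrightarrow> quasicategory (Ex_op_plus X W))"
  using mrlp_L_of_quasicategory_Ex_plus quasicategory_Ex_plus
    mrlp_R_of_quasicategory_Ex_op_plus quasicategory_Ex_op_plus
  by blast

end
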